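(* Let $S\rightarrowtail G\overset{\pi}{\twoheadrightarrow}H$ be a groupoid extension, let $T$ be a locally compact abelian group bundle over $G^{(0)}$ (bundle map $p_T$) endowed with a continuous action of $H$ by group isomorphisms $T_{s(h)}\to T_{r(h)}$, $t\mapsto ht$, and let $\varphi:S\to T$ be an equivariant continuous group bundle morphism, i.e. $\varphi(\gamma s\gamma^{-1})=\dot\gamma\,\varphi(s)$ for all composable $(\gamma,s)\in G*S$. Then there exist an extension $T\rightarrowtail\underline G\twoheadrightarrow H$ and a continuous homomorphism $\varphi_*:G\to\underline G$ which restricts to $\varphi$ on $S$ and is compatible with the projections onto $H$; these are unique up to isomorphism. Explicitly, $T*G=\{(t,\gamma):p_T(t)=r(\gamma)\}$ with multiplication $(t,\gamma)(t',\gamma')=(t(\dot\gamma t'),\gamma\gamma')$ and inverse $(t,\gamma)^{-1}=(\dot\gamma^{-1}(t^{-1}),\gamma^{-1})$ is a locally compact groupoid, $i(s)=(\varphi(s^{-1}),s)$ embeds $S$ as a closed normal subgroupoid, and $\underline G=(T*G)/i(S)$, i.e. the classes $[t,\gamma]$ with $[t,\gamma]=[t\varphi(s^{-1}),s\gamma]$, with product $[t,\gamma][t',\gamma']=[t(\dot\gamma t'),\gamma\gamma']$, inverse $[t,\gamma]^{-1}=[\dot\gamma^{-1}(t^{-1}),\gamma^{-1}]$, projection $[t,\gamma]\mapsto\pi(\gamma)$, inclusion $t\mapsto[t,p_T(t)]$ of $T$, and $\varphi_*(\gamma)=[r(\gamma),\gamma]$.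
   Context: A groupoid extension $S\rightarrowtail G\twoheadrightarrow H$ is a continuous open surjective homomorphism $\pi:G\to H$ of locally compact Hausdorff groupoids which is the identity on the common unit space $G^{(0)}=H^{(0)}$, with kernel $S$ (a closed normal subgroup bundle of the isotropy of $G$); write $\dot\gamma=\pi(\gamma)$. $r(t)$ denotes the unit $p_T(t)$ when $t$ is regarded in the pushout, e.g. $r(\gamma)$ in $[r(\gamma),\gamma]$ is the unit of $T_{r(\gamma)}$. *)

theory Defs
  imports "HOL-Analysis.Analysis"
begin

text \<open>Multiplication mu g h is meaningful when
src g = rng h.\<close>

record ('g, 'u) groupoid =
  gr_arr :: "'g topology"
  gr_obj :: "'u topology"
  gr_rng :: "'g \<Rightarrow> 'u"
  gr_src :: "'g \<Rightarrow> 'u"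
  gr_unit :: "'u \<Rightarrow> 'g"
  gr_mul :: "'g \<Rightarrow> 'g \<Rightarrow> 'g"
  gr_inv :: "'g \<Rightarrow> 'g"

definition garr :: "('g, 'u, 'z) groupoid_scheme \<Rightarrow> 'g set" where
  "garr G = topspace (gr_arr G)"

definition gobj :: "('g, 'u, 'z) groupoid_scheme \<Rightarrow> 'u set" where
  "gobj G = topspace (gr_obj G)"

definition composable :: "('g, 'u, 'z) groupoid_scheme \<Rightarrow> ('g \<times> 'g) set" where
  "composable G = {(g, h). g \<in> garr G \<and> h \<in> garr G \<and> gr_src G g = gr_rng G h}"

definition is_groupoid :: "('g, 'u, 'z) groupoid_scheme \<Rightarrow> bool" where
  "is_groupoid G \<longleftrightarrow>
     (\<forall>x\<in>gobj G. gr_unit G x \<in> garr G \<and> gr_rng G (gr_unit G x) = x \<and> gr_src G (gr_unit G x) = x) \<and>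
     (\<forall>g\<in>garr G. gr_rng G g \<in> gobj G \<and> gr_src G g \<in> gobj G) \<and>
     (\<forall>g\<in>garr G. \<forall>h\<in>garr G. gr_src G g = gr_rng G h \<longrightarrow>
        gr_mul G g h \<in> garr G \<and> gr_rng G (gr_mul G g h) = gr_rng G g \<and>
        gr_src G (gr_mul G g h) = gr_src G h) \<and>
     (\<forall>g\<in>garr G. \<forall>h\<in>garr G. \<forall>k\<in>garr G. gr_src G g = gr_rng G h \<longrightarrow> gr_src G h = gr_rng G k \<longrightarrow>
        gr_mul G (gr_mul G g h) k = gr_mul G g (gr_mul G h k)) \<and>
     (\<forall>g\<in>garr G. gr_mul G (gr_unit G (gr_rng G g)) g = g \<and> gr_mul G g (gr_unit G (gr_src G g)) = g) \<and>
     (\<forall>g\<in>garr G. gr_inv G g \<in> garr G \<and> gr_rng G (gr_inv G g) = gr_src G g \<and>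
        gr_src G (gr_inv G g) = gr_rng G g \<and>
        gr_mul G g (gr_inv G g) = gr_unit G (gr_rng G g) \<and>
        gr_mul G (gr_inv G g) g = gr_unit G (gr_src G g))"

definition topological_groupoid :: "('g, 'u, 'z) groupoid_scheme \<Rightarrow> bool" where
  "topological_groupoid G \<longleftrightarrow> is_groupoid G \<and>
     continuous_map (gr_arr G) (gr_obj G) (gr_rng G) \<and>
     continuous_map (gr_arr G) (gr_obj G) (gr_src G) \<and>
     continuous_map (gr_obj G) (gr_arr G) (gr_unit G) \<and>
     continuous_map (subtopology (prod_topology (gr_arr G) (gr_arr G)) (composable G)) (gr_arr G)
        (\<lambda>(g, h). gr_mul G g h) \<and>
     continuous_map (gr_arr G) (gr_arr G) (gr_inv G)"

definition lc_groupoid :: "('g, 'u, 'z) groupoid_scheme \<Rightarrow> bool" where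
  "lc_groupoid G \<longleftrightarrow> topological_groupoid G \<and>
     locally_compact_space (gr_arr G) \<and> Hausdorff_space (gr_arr G) \<and>
     locally_compact_space (gr_obj G) \<and> Hausdorff_space (gr_obj G)"

definition hom_over :: "('g, 'u, 'z) groupoid_scheme \<Rightarrow> ('h, 'u, 'y) groupoid_scheme \<Rightarrow> ('g \<Rightarrow> 'h) \<Rightarrow> bool" where
  "hom_over G K f \<longleftrightarrow>
     (\<forall>g\<in>garr G. f g \<in> garr K \<and> gr_rng K (f g) = gr_rng G g \<and> gr_src K (f g) = gr_src G g) \<and>
     (\<forall>(g, h)\<in>composable G. f (gr_mul G g h) = gr_mul K (f g) (f h))"

definition groupoid_extension :: "('g, 'u, 'z) groupoid_scheme \<Rightarrow> ('h, 'u, 'y) groupoid_scheme \<Rightarrow> ('g \<Rightarrow> 'h) \<Rightarrow> bool" where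
  "groupoid_extension G H p \<longleftrightarrow> lc_groupoid G \<and> lc_groupoid H \<and> gr_obj G = gr_obj H \<and>
     hom_over G H p \<and> continuous_map (gr_arr G) (gr_arr H) p \<and> open_map (gr_arr G) (gr_arr H) p \<and>
     p ` garr G = garr H"

definition ext_kernel :: "('g, 'u, 'z) groupoid_scheme \<Rightarrow> ('h, 'u, 'y) groupoid_scheme \<Rightarrow> ('g \<Rightarrow> 'h) \<Rightarrow> 'g set" where
  "ext_kernel G H p = {g \<in> garr G. p g = gr_unit H (gr_rng G g)}"

text \<open>Locally compact (Hausdorff) group bundle: a groupoid all of whose arrows are
isotropy; the bundle map p_T is the range map, assumed open.\<close>
definition lc_group_bundle :: "('t, 'u, 'z) groupoid_scheme \<Rightarrow> bool" where
  "lc_group_bundle T \<longleftrightarrow> lc_groupoid T \<and> (\<forall>t\<in>garr T. gr_rng T t = gr_src T t) \<and>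
     open_map (gr_arr T) (gr_obj T) (gr_rng T)"

definition abelian_bundle :: "('t, 'u, 'z) groupoid_scheme \<Rightarrow> bool" where
  "abelian_bundle T \<longleftrightarrow> (\<forall>t\<in>garr T. \<forall>t'\<in>garr T. gr_rng T t = gr_rng T t' \<longrightarrow>
      gr_mul T t t' = gr_mul T t' t)"

definition bundle_action :: "('h, 'u, 'y) groupoid_scheme \<Rightarrow> ('t, 'u, 'z) groupoid_scheme \<Rightarrow> ('h \<Rightarrow> 't \<Rightarrow> 't) \<Rightarrow> bool" where
  "bundle_action H T a \<longleftrightarrow>
     (\<forall>h\<in>garr H. \<forall>t\<in>garr T. gr_src H h = gr_rng T t \<longrightarrow> a h t \<in> garr T \<and> gr_rng T (a h t) = gr_rng H h) \<and>
     (\<forall>t\<in>garr T. a (gr_unit H (gr_rng T t)) t = t) \<and>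
     (\<forall>h\<in>garr H. \<forall>k\<in>garr H. \<forall>t\<in>garr T. gr_src H h = gr_rng H k \<longrightarrow> gr_src H k = gr_rng T t \<longrightarrow>
        a (gr_mul H h k) t = a h (a k t)) \<and>
     (\<forall>h\<in>garr H. \<forall>t\<in>garr T. \<forall>t'\<in>garr T. gr_src H h = gr_rng T t \<longrightarrow> gr_rng T t' = gr_rng T t \<longrightarrow>
        a h (gr_mul T t t') = gr_mul T (a h t) (a h t')) \<and>
     continuous_map
       (subtopology (prod_topology (gr_arr H) (gr_arr T))
          {(h, t). h \<in> garr H \<and> t \<in> garr T \<and> gr_src H h = gr_rng T t})
       (gr_arr T) (\<lambda>(h, t). a h t)"

definition bundle_morphism :: "('g, 'u, 'z) groupoid_scheme \<Rightarrow> 'g set \<Rightarrow> ('t, 'u, 'y) groupoid_scheme \<Rightarrow> ('g \<Rightarrow> 't) \<Rightarrow> bool" where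
  "bundle_morphism G S T f \<longleftrightarrow>
     (\<forall>s\<in>S. f s \<in> garr T \<and> gr_rng T (f s) = gr_rng G s) \<and>
     (\<forall>s\<in>S. \<forall>s'\<in>S. gr_rng G s = gr_rng G s' \<longrightarrow> f (gr_mul G s s') = gr_mul T (f s) (f s')) \<and>
     continuous_map (subtopology (gr_arr G) S) (gr_arr T) f"

definition T_extension :: "('t, 'u, 'x) groupoid_scheme \<Rightarrow> ('h, 'u, 'y) groupoid_scheme \<Rightarrow> ('h \<Rightarrow> 't \<Rightarrow> 't)
      \<Rightarrow> ('c, 'u, 'z) groupoid_scheme \<Rightarrow> ('c \<Rightarrow> 'h) \<Rightarrow> ('t \<Rightarrow> 'c) \<Rightarrow> bool" where
  "T_extension T H a G' p' j \<longleftrightarrow> groupoid_extension G' H p' \<and> gr_obj T = gr_obj G' \<and>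
     homeomorphic_map (gr_arr T) (subtopology (gr_arr G') (ext_kernel G' H p')) j \<and>
     hom_over T G' j \<and>
     (\<forall>g\<in>garr G'. \<forall>t\<in>garr T. gr_src G' g = gr_rng T t \<longrightarrow>
        gr_mul G' (gr_mul G' g (j t)) (gr_inv G' g) = j (a (p' g) t))"

definition is_pushout :: "('g, 'u, 'w) groupoid_scheme \<Rightarrow> ('h, 'u, 'y) groupoid_scheme \<Rightarrow> ('g \<Rightarrow> 'h)
      \<Rightarrow> ('t, 'u, 'x) groupoid_scheme \<Rightarrow> ('h \<Rightarrow> 't \<Rightarrow> 't) \<Rightarrow> ('g \<Rightarrow> 't)
      \<Rightarrow> ('c, 'u, 'z) groupoid_scheme \<Rightarrow> ('c \<Rightarrow> 'h) \<Rightarrow> ('t \<Rightarrow> 'c) \<Rightarrow> ('g \<Rightarrow> 'c) \<Rightarrow> bool" where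
  "is_pushout G H p T a phi G' p' j psi \<longleftrightarrow> T_extension T H a G' p' j \<and>
     hom_over G G' psi \<and> continuous_map (gr_arr G) (gr_arr G') psi \<and>
     (\<forall>s\<in>ext_kernel G H p. psi s = j (phi s)) \<and>
     (\<forall>g\<in>garr G. p' (psi g) = p g)"

definition pushouts_iso :: "('g, 'u, 'w) groupoid_scheme \<Rightarrow> ('t, 'u, 'x) groupoid_scheme
      \<Rightarrow> ('c, 'u, 'z) groupoid_scheme \<Rightarrow> ('c \<Rightarrow> 'h) \<Rightarrow> ('t \<Rightarrow> 'c) \<Rightarrow> ('g \<Rightarrow> 'c)
      \<Rightarrow> ('d, 'u, 'v) groupoid_scheme \<Rightarrow> ('d \<Rightarrow> 'h) \<Rightarrow> ('t \<Rightarrow> 'd) \<Rightarrow> ('g \<Rightarrow> 'd) \<Rightarrow> bool" where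
  "pushouts_iso G T G1 p1 j1 psi1 G2 p2 j2 psi2 \<longleftrightarrow>
     (\<exists>F. homeomorphic_map (gr_arr G1) (gr_arr G2) F \<and> hom_over G1 G2 F \<and>
        (\<forall>t\<in>garr T. F (j1 t) = j2 t) \<and> (\<forall>x\<in>garr G1. p2 (F x) = p1 x) \<and>
        (\<forall>g\<in>garr G. F (psi1 g) = psi2 g))"

definition TG_set :: "('t, 'u, 'x) groupoid_scheme \<Rightarrow> ('g, 'u, 'w) groupoid_scheme \<Rightarrow> ('t \<times> 'g) set" where
  "TG_set T G = {(t, g). t \<in> garr T \<and> g \<in> garr G \<and> gr_rng T t = gr_rng G g}"

definition TG_groupoid :: "('g, 'u, 'w) groupoid_scheme \<Rightarrow> ('g \<Rightarrow> 'h)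
      \<Rightarrow> ('t, 'u, 'x) groupoid_scheme \<Rightarrow> ('h \<Rightarrow> 't \<Rightarrow> 't) \<Rightarrow> ('t \<times> 'g, 'u) groupoid" where
  "TG_groupoid G p T a =
     \<lparr> gr_arr = subtopology (prod_topology (gr_arr T) (gr_arr G)) (TG_set T G),
       gr_obj = gr_obj G,
       gr_rng = (\<lambda>(t, g). gr_rng G g),
       gr_src = (\<lambda>(t, g). gr_src G g),
       gr_unit = (\<lambda>x. (gr_unit T x, gr_unit G x)),
       gr_mul = (\<lambda>(t, g) (t', g'). (gr_mul T t (a (p g) t'), gr_mul G g g')),
       gr_inv = (\<lambda>(t, g). (a (p (gr_inv G g)) (gr_inv T t), gr_inv G g)) \<rparr>"

definition embS :: "('g, 'u, 'w) groupoid_scheme \<Rightarrow> ('g \<Rightarrow> 't) \<Rightarrow> 'g \<Rightarrow> 't \<times> 'g" where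
  "embS G phi s = (phi (gr_inv G s), s)"

definition TG_rel :: "('g, 'u, 'w) groupoid_scheme \<Rightarrow> ('h, 'u, 'y) groupoid_scheme \<Rightarrow> ('g \<Rightarrow> 'h)
      \<Rightarrow> ('t, 'u, 'x) groupoid_scheme \<Rightarrow> ('g \<Rightarrow> 't) \<Rightarrow> (('t \<times> 'g) \<times> ('t \<times> 'g)) set" where
  "TG_rel G H p T phi =
     {((t, g), (gr_mul T t (phi (gr_inv G s)), gr_mul G s g)) | t g s.
        (t, g) \<in> TG_set T G \<and> s \<in> ext_kernel G H p \<and> gr_src G s = gr_rng G g}"

definition cls :: "('a \<times> 'a) set \<Rightarrow> 'a \<Rightarrow> 'a set" where
  "cls R x = R `` {x}"

definition rep :: "'a set \<Rightarrow> 'a" where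
  "rep A = (SOME x. x \<in> A)"

definition quotient_topology :: "'a topology \<Rightarrow> ('a \<times> 'a) set \<Rightarrow> 'a set topology" where
  "quotient_topology X R =
     topology_generated_by {U. U \<subseteq> topspace X // R \<and> openin X (\<Union>U)}"

definition pushout_groupoid :: "('g, 'u, 'w) groupoid_scheme \<Rightarrow> ('h, 'u, 'y) groupoid_scheme \<Rightarrow> ('g \<Rightarrow> 'h)
      \<Rightarrow> ('t, 'u, 'x) groupoid_scheme \<Rightarrow> ('h \<Rightarrow> 't \<Rightarrow> 't) \<Rightarrow> ('g \<Rightarrow> 't) \<Rightarrow> (('t \<times> 'g) set, 'u) groupoid" where
  "pushout_groupoid G H p T a phi =
     (let TG = TG_groupoid G p T a; R = TG_rel G H p T phi in
     \<lparr> gr_arr = quotient_topology (gr_arr TG) R,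
       gr_obj = gr_obj G,
       gr_rng = (\<lambda>A. gr_rng G (snd (rep A))),
       gr_src = (\<lambda>A. gr_src G (snd (rep A))),
       gr_unit = (\<lambda>x. cls R (gr_unit T x, gr_unit G x)),
       gr_mul = (\<lambda>A B. cls R (gr_mul TG (rep A) (rep B))),
       gr_inv = (\<lambda>A. cls R (gr_inv TG (rep A))) \<rparr>)"

definition pushout_proj :: "('g \<Rightarrow> 'h) \<Rightarrow> ('t \<times> 'g) set \<Rightarrow> 'h" where
  "pushout_proj p A = p (snd (rep A))"

definition pushout_incl :: "('g, 'u, 'w) groupoid_scheme \<Rightarrow> ('h, 'u, 'y) groupoid_scheme \<Rightarrow> ('g \<Rightarrow> 'h)
      \<Rightarrow> ('t, 'u, 'x) groupoid_scheme \<Rightarrow> ('g \<Rightarrow> 't) \<Rightarrow> 't \<Rightarrow> ('t \<times> 'g) set" where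
  "pushout_incl G H p T phi t = cls (TG_rel G H p T phi) (t, gr_unit G (gr_rng T t))"

definition phi_star :: "('g, 'u, 'w) groupoid_scheme \<Rightarrow> ('h, 'u, 'y) groupoid_scheme \<Rightarrow> ('g \<Rightarrow> 'h)
      \<Rightarrow> ('t, 'u, 'x) groupoid_scheme \<Rightarrow> ('g \<Rightarrow> 't) \<Rightarrow> 'g \<Rightarrow> ('t \<times> 'g) set" where
  "phi_star G H p T phi g = cls (TG_rel G H p T phi) (gr_unit T (gr_rng G g), g)"

definition closed_normal_subgroupoid :: "('g, 'u, 'z) groupoid_scheme \<Rightarrow> 'g set \<Rightarrow> bool" where
  "closed_normal_subgroupoid K N \<longleftrightarrow> N \<subseteq> garr K \<and> closedin (gr_arr K) N \<and>
     (\<forall>n\<in>N. gr_rng K n = gr_src K n) \<and>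
     (\<forall>x\<in>gobj K. gr_unit K x \<in> N) \<and>
     (\<forall>n\<in>N. \<forall>m\<in>N. gr_src K n = gr_rng K m \<longrightarrow> gr_mul K n m \<in> N) \<and>
     (\<forall>n\<in>N. gr_inv K n \<in> N) \<and>
     (\<forall>g\<in>garr K. \<forall>n\<in>N. gr_src K g = gr_rng K n \<longrightarrow> gr_mul K (gr_mul K g n) (gr_inv K g) \<in> N)"

end

theory Submission
  imports Defs
begin

text \<open>
  \<open>T * G\<close> is a closed subspace of \<open>T \<times> G\<close>, hence locally compact Hausdorff, and the map
  \<open>s \<mapsto> (\<phi>(s\<^sup>-\<^sup>1), s)\<close> embeds \<open>S\<close> in it as a closed normal subgroupoid; normality is precisely
  the equivariance of \<open>\<phi>\<close>. Commutativity of \<open>T\<close> makes the relation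
  \<open>(t, \<gamma>) \<sim> (t \<phi>(s\<^sup>-\<^sup>1), s \<gamma>)\<close> a congruence, so the quotient is a groupoid. The quotient map
  is open: near a point related to an open set \<open>W\<close>, the continuous section
  \<open>((t', \<gamma>'), \<gamma>) \<mapsto> t' \<phi>(\<gamma>' \<gamma>\<^sup>-\<^sup>1)\<close> over the fibres of the open map \<open>\<pi>\<close> produces related points
  of \<open>W\<close>. With the closedness of the relation this makes the quotient locally compact Hausdorff.
  For any other pushout \<open>(G', j, \<psi>)\<close> the comparison map \<open>[t, \<gamma>] \<mapsto> j(t) \<psi>(\<gamma>)\<close> is a continuous
  bijective homomorphism, and it is open by the same section argument, with
  \<open>(x, \<gamma>) \<mapsto> j\<^sup>-\<^sup>1(x \<psi>(\<gamma>)\<^sup>-\<^sup>1)\<close>.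
\<close>

section \<open>Groupoids\<close>

locale groupoid_laws =
  fixes G :: "('g, 'u, 'z) groupoid_scheme"
  assumes groupoid: "is_groupoid G"
begin

abbreviation "arr \<equiv> garr G"
abbreviation "obj \<equiv> gobj G"
abbreviation "rg \<equiv> gr_rng G"
abbreviation "sr \<equiv> gr_src G"
abbreviation "un \<equiv> gr_unit G"
abbreviation "m \<equiv> gr_mul G"
abbreviation "iv \<equiv> gr_inv G"

lemma unit_arr[simp]: "x \<in> obj \<Longrightarrow> un x \<in> arr"
  and rg_unit[simp]: "x \<in> obj \<Longrightarrow> rg (un x) = x"
  and sr_unit[simp]: "x \<in> obj \<Longrightarrow> sr (un x) = x"
  and rg_obj[simp]: "g \<in> arr \<Longrightarrow> rg g \<in> obj"
  and sr_obj[simp]: "g \<in> arr \<Longrightarrow> sr g \<in> obj"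
  using groupoid unfolding is_groupoid_def by auto

lemma mul_arr[simp]: "g \<in> arr \<Longrightarrow> h \<in> arr \<Longrightarrow> sr g = rg h \<Longrightarrow> m g h \<in> arr"
  and rg_mul[simp]: "g \<in> arr \<Longrightarrow> h \<in> arr \<Longrightarrow> sr g = rg h \<Longrightarrow> rg (m g h) = rg g"
  and sr_mul[simp]: "g \<in> arr \<Longrightarrow> h \<in> arr \<Longrightarrow> sr g = rg h \<Longrightarrow> sr (m g h) = sr h"
  using groupoid unfolding is_groupoid_def by auto

lemma assoc: "g \<in> arr \<Longrightarrow> h \<in> arr \<Longrightarrow> k \<in> arr \<Longrightarrow> sr g = rg h \<Longrightarrow> sr h = rg k \<Longrightarrow>
   m (m g h) k = m g (m h k)"
  using groupoid unfolding is_groupoid_def by blast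

lemma left_unit[simp]: "g \<in> arr \<Longrightarrow> m (un (rg g)) g = g"
  and right_unit[simp]: "g \<in> arr \<Longrightarrow> m g (un (sr g)) = g"
  using groupoid unfolding is_groupoid_def by auto

lemma inv_arr[simp]: "g \<in> arr \<Longrightarrow> iv g \<in> arr"
  and rg_inv[simp]: "g \<in> arr \<Longrightarrow> rg (iv g) = sr g"
  and sr_inv[simp]: "g \<in> arr \<Longrightarrow> sr (iv g) = rg g"
  and inv_r[simp]: "g \<in> arr \<Longrightarrow> m g (iv g) = un (rg g)"
  and inv_l[simp]: "g \<in> arr \<Longrightarrow> m (iv g) g = un (sr g)"
  using groupoid unfolding is_groupoid_def by auto

lemma left_unit'[simp]: "g \<in> arr \<Longrightarrow> x = rg g \<Longrightarrow> m (un x) g = g"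
  by simp
lemma right_unit'[simp]: "g \<in> arr \<Longrightarrow> x = sr g \<Longrightarrow> m g (un x) = g"
  by simp

lemma cancel_left:
  assumes "g \<in> arr" "h \<in> arr" "k \<in> arr" "sr g = rg h" "sr g = rg k" "m g h = m g k"
  shows "h = k"
proof -
  have "h = m (m (iv g) g) h" using assms(1-5) by simp
  also have "\<dots> = m (iv g) (m g h)" by (rule assoc) (use assms(1-5) in auto)
  also have "\<dots> = m (iv g) (m g k)" using assms(6) by simp
  also have "\<dots> = m (m (iv g) g) k" by (rule assoc[symmetric]) (use assms(1-5) in auto)
  also have "\<dots> = k" using assms(1-5) by simp
  finally show ?thesis .
qed

lemma cancel_right:
  assumes "g \<in> arr" "h \<in> arr" "k \<in> arr" "sr h = rg g" "sr k = rg g" "m h g = m k g"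
  shows "h = k"
proof -
  have "h = m h (m g (iv g))" using assms(1-5) by simp
  also have "\<dots> = m (m h g) (iv g)" by (rule assoc[symmetric]) (use assms(1-5) in auto)
  also have "\<dots> = m (m k g) (iv g)" using assms(6) by simp
  also have "\<dots> = m k (m g (iv g))" by (rule assoc) (use assms(1-5) in auto)
  also have "\<dots> = k" using assms(1-5) by simp
  finally show ?thesis .
qed

lemma idem_unit: "g \<in> arr \<Longrightarrow> sr g = rg g \<Longrightarrow> m g g = g \<Longrightarrow> g = un (rg g)"
  using cancel_left[of g g "un (rg g)"] by simp

lemma inv_unique: "g \<in> arr \<Longrightarrow> h \<in> arr \<Longrightarrow> sr g = rg h \<Longrightarrow> m g h = un (rg g) \<Longrightarrow> h = iv g"
  using cancel_left[of g h "iv g"] by simp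

lemma inv_inv[simp]: "g \<in> arr \<Longrightarrow> iv (iv g) = g"
  using inv_unique[of "iv g" g] by simp

lemma inv_unit[simp]: "x \<in> obj \<Longrightarrow> iv (un x) = un x"
  using inv_unique[of "un x" "un x"] by simp

lemma inv_mul: "g \<in> arr \<Longrightarrow> h \<in> arr \<Longrightarrow> sr g = rg h \<Longrightarrow> iv (m g h) = m (iv h) (iv g)"
proof -
  assume a: "g \<in> arr" "h \<in> arr" "sr g = rg h"
  have "m (m g h) (m (iv h) (iv g)) = m g (m (m h (iv h)) (iv g))"
    using a by (simp add: assoc del: inv_r)
  also have "\<dots> = un (rg g)" using a by simp
  finally show ?thesis using a by (intro inv_unique[symmetric]) auto
qed

lemma conj_inv:
  assumes "g \<in> arr" "s \<in> arr" "sr g = rg s" "sr s = rg s"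
  shows "iv (m (m g s) (iv g)) = m (m g (iv s)) (iv g)"
proof -
  have "iv (m (m g s) (iv g)) = m (iv (iv g)) (iv (m g s))" using assms by (simp add: inv_mul)
  also have "\<dots> = m g (m (iv s) (iv g))" using assms by (simp add: inv_mul)
  also have "\<dots> = m (m g (iv s)) (iv g)" using assms by (intro assoc[symmetric]) auto
  finally show ?thesis .
qed

lemma mul_conj_shift:
  assumes "s \<in> arr" "g \<in> arr" "r \<in> arr" "h \<in> arr"
    and "sr s = rg g" "rg r = sr g" "sr r = sr g" "rg h = sr g"
  shows "m (m s g) (m r h) = m (m s (m (m g r) (iv g))) (m g h)"
proof -
  have "m (m s (m (m g r) (iv g))) (m g h) = m s (m (m (m g r) (iv g)) (m g h))"
    using assms by (intro assoc) auto
  also have "m (m (m g r) (iv g)) (m g h) = m (m g r) (m (iv g) (m g h))"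
    using assms by (intro assoc) auto
  also have "m (iv g) (m g h) = h" using assms assoc[of "iv g" g h] by simp
  also have "m (m g r) h = m g (m r h)" using assms by (intro assoc) auto
  also have "m s (m g (m r h)) = m (m s g) (m r h)" using assms by (intro assoc[symmetric]) auto
  finally show ?thesis by simp
qed

lemma assoc4:
  assumes "a \<in> arr" "b \<in> arr" "c \<in> arr" "d \<in> arr" "sr a = rg b" "sr b = rg c" "sr c = rg d"
  shows "m (m a b) (m c d) = m a (m (m b c) d)"
proof -
  have "m (m a b) (m c d) = m a (m b (m c d))" using assms by (intro assoc) auto
  also have "m b (m c d) = m (m b c) d" using assms by (intro assoc[symmetric]) auto
  finally show ?thesis .
qed

end

lemma hom_over_unit:
  assumes "is_groupoid G" "is_groupoid K" "hom_over G K f" "x \<in> gobj G"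
  shows "f (gr_unit G x) = gr_unit K x"
proof -
  interpret g: groupoid_laws G by (rule groupoid_laws.intro) fact
  interpret k: groupoid_laws K by (rule groupoid_laws.intro) fact
  have u: "gr_unit G x \<in> garr G" using assms by simp
  have c: "(gr_unit G x, gr_unit G x) \<in> composable G" using assms by (simp add: composable_def)
  have "f (gr_unit G x) = f (gr_mul G (gr_unit G x) (gr_unit G x))" using assms by simp
  also have "\<dots> = gr_mul K (f (gr_unit G x)) (f (gr_unit G x))"
    using assms(3) c unfolding hom_over_def by auto
  finally have e: "f (gr_unit G x) = gr_mul K (f (gr_unit G x)) (f (gr_unit G x))" .
  have "f (gr_unit G x) \<in> garr K" "gr_rng K (f (gr_unit G x)) = x" "gr_src K (f (gr_unit G x)) = x"
    using assms(3) u assms(4) unfolding hom_over_def by auto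
  then show ?thesis using k.idem_unit e by force
qed

lemma hom_over_inv:
  assumes "is_groupoid G" "is_groupoid K" "hom_over G K f" "g \<in> garr G"
  shows "f (gr_inv G g) = gr_inv K (f g)"
proof -
  interpret g: groupoid_laws G by (rule groupoid_laws.intro) fact
  interpret k: groupoid_laws K by (rule groupoid_laws.intro) fact
  have h: "\<And>x y. (x,y) \<in> composable G \<Longrightarrow> f (gr_mul G x y) = gr_mul K (f x) (f y)"
    using assms(3) unfolding hom_over_def by auto
  have a: "\<And>x. x \<in> garr G \<Longrightarrow> f x \<in> garr K \<and> gr_rng K (f x) = gr_rng G x \<and> gr_src K (f x) = gr_src G x"
    using assms(3) unfolding hom_over_def by auto
  have "gr_mul K (f g) (f (gr_inv G g)) = f (gr_unit G (gr_rng G g))"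
    using h[of g "gr_inv G g"] assms(4) by (simp add: composable_def)
  also have "\<dots> = gr_unit K (gr_rng K (f g))" using hom_over_unit[OF assms(1-3)] assms(4) a by simp
  finally show ?thesis using a[of g] a[of "gr_inv G g"] assms(4)
    by (intro k.inv_unique) auto
qed

lemma hom_over_mul:
  "hom_over G K f \<Longrightarrow> g \<in> garr G \<Longrightarrow> h \<in> garr G \<Longrightarrow> gr_src G g = gr_rng G h \<Longrightarrow>
    f (gr_mul G g h) = gr_mul K (f g) (f h)"
  unfolding hom_over_def composable_def by auto

lemma hom_over_arr:
  "hom_over G K f \<Longrightarrow> g \<in> garr G \<Longrightarrow> f g \<in> garr K"
  and hom_over_rg:
  "hom_over G K f \<Longrightarrow> g \<in> garr G \<Longrightarrow> gr_rng K (f g) = gr_rng G g"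
  and hom_over_sr:
  "hom_over G K f \<Longrightarrow> g \<in> garr G \<Longrightarrow> gr_src K (f g) = gr_src G g"
  unfolding hom_over_def by auto

lemma is_groupoid_image:
  assumes K: "is_groupoid K"
    and onto: "f ` garr K = garr L" and obj: "gobj L = gobj K"
    and rng: "\<And>x. x \<in> garr K \<Longrightarrow> gr_rng L (f x) = gr_rng K x"
    and src: "\<And>x. x \<in> garr K \<Longrightarrow> gr_src L (f x) = gr_src K x"
    and unit: "\<And>u. u \<in> gobj K \<Longrightarrow> gr_unit L u = f (gr_unit K u)"
    and mul: "\<And>x y. x \<in> garr K \<Longrightarrow> y \<in> garr K \<Longrightarrow> gr_src K x = gr_rng K y \<Longrightarrow>
      gr_mul L (f x) (f y) = f (gr_mul K x y)"
    and inv: "\<And>x. x \<in> garr K \<Longrightarrow> gr_inv L (f x) = f (gr_inv K x)"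
  shows "is_groupoid L"
proof -
  interpret K: groupoid_laws K by (rule groupoid_laws.intro) fact
  have "\<And>x. x \<in> garr K \<Longrightarrow> f x \<in> garr L" using onto by auto
  then show ?thesis
    unfolding is_groupoid_def obj onto[symmetric] ball_simps
    using rng src unit mul inv by (simp add: K.assoc)
qed

lemma continuous_map_apply2:
  assumes F: "continuous_map (subtopology (prod_topology X Y) D) W (\<lambda>(x,y). F x y)"
    and f1: "continuous_map Z X f1" and f2: "continuous_map Z Y f2"
    and D: "\<And>z. z \<in> topspace Z \<Longrightarrow> (f1 z, f2 z) \<in> D"
  shows "continuous_map Z W (\<lambda>z. F (f1 z) (f2 z))"
proof -
  have "continuous_map Z (subtopology (prod_topology X Y) D) (\<lambda>z. (f1 z, f2 z))"
    using f1 f2 D by (auto simp: continuous_map_in_subtopology continuous_map_paired)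
  from continuous_map_compose[OF this F] show ?thesis by (simp add: o_def)
qed

lemma continuous_map_box_nbhd:
  assumes f: "continuous_map (subtopology (prod_topology X Y) D) Z f" and Ob: "openin Z Ob"
    and xy: "(x,y) \<in> D" "x \<in> topspace X" "y \<in> topspace Y" "f (x,y) \<in> Ob"
  shows "\<exists>A B. openin X A \<and> openin Y B \<and> x \<in> A \<and> y \<in> B \<and>
           (\<forall>u v. u \<in> A \<longrightarrow> v \<in> B \<longrightarrow> (u,v) \<in> D \<longrightarrow> f (u,v) \<in> Ob)"
proof -
  have "openin (subtopology (prod_topology X Y) D) {z \<in> topspace (subtopology (prod_topology X Y) D). f z \<in> Ob}"
    using f Ob by (rule openin_continuous_map_preimage)
  then obtain W where W: "openin (prod_topology X Y) W"
    and eq: "{z \<in> topspace (subtopology (prod_topology X Y) D). f z \<in> Ob} = W \<inter> D"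
    by (auto simp: openin_subtopology)
  have "(x,y) \<in> W" using eq xy by auto
  then obtain A B where AB: "openin X A" "openin Y B" "x \<in> A" "y \<in> B" "A \<times> B \<subseteq> W"
    using W by (metis openin_prod_topology_alt)
  show ?thesis
  proof (intro exI conjI allI impI)
    fix u v assume "u \<in> A" "v \<in> B" "(u,v) \<in> D"
    then have "(u,v) \<in> W \<inter> D" using AB by auto
    then show "f (u,v) \<in> Ob" using eq by blast
  qed (use AB in auto)
qed

lemma open_map_prod:
  assumes f: "open_map X X' f" and g: "open_map Y Y' g"
  shows "open_map (prod_topology X Y) (prod_topology X' Y') (\<lambda>(x,y). (f x, g y))"
  unfolding open_map_def
proof (intro allI impI)
  fix W assume W: "openin (prod_topology X Y) W"
  show "openin (prod_topology X' Y') ((\<lambda>(x,y). (f x, g y)) ` W)"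
    unfolding openin_prod_topology_alt
  proof (intro allI impI)
    fix x' y' assume "(x', y') \<in> (\<lambda>(x,y). (f x, g y)) ` W"
    then obtain x y where xy: "(x,y) \<in> W" "x' = f x" "y' = g y" by auto
    then obtain A B where AB: "openin X A" "openin Y B" "x \<in> A" "y \<in> B" "A \<times> B \<subseteq> W"
      using W by (metis openin_prod_topology_alt)
    show "\<exists>U V. openin X' U \<and> openin Y' V \<and> x' \<in> U \<and> y' \<in> V \<and> U \<times> V \<subseteq> (\<lambda>(x,y). (f x, g y)) ` W"
      using AB xy f g by (intro exI[of _ "f ` A"] exI[of _ "g ` B"]) (auto simp: open_map_def)
  qed
qed

lemma continuous_map_comp: "continuous_map X Y f \<Longrightarrow> continuous_map Y Z g \<Longrightarrow> continuous_map X Z (\<lambda>x. g (f x))"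
  using continuous_map_compose[of X Y f Z g] by (simp add: o_def)

lemma continuous_map_in: "continuous_map X Y f \<Longrightarrow> x \<in> topspace X \<Longrightarrow> f x \<in> topspace Y"
  unfolding continuous_map_def by auto

lemma continuous_map_fst_sub: "continuous_map (subtopology (prod_topology X Y) D) X fst"
  by (rule continuous_map_from_subtopology[OF continuous_map_fst])
lemma continuous_map_snd_sub: "continuous_map (subtopology (prod_topology X Y) D) Y snd"
  by (rule continuous_map_from_subtopology[OF continuous_map_snd])

lemma
  assumes "lc_groupoid K"
  shows lc_topological: "topological_groupoid K"
    and lc_is_groupoid: "is_groupoid K"
    and lc_rng_cont: "continuous_map (gr_arr K) (gr_obj K) (gr_rng K)"
    and lc_src_cont: "continuous_map (gr_arr K) (gr_obj K) (gr_src K)"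
    and lc_unit_cont: "continuous_map (gr_obj K) (gr_arr K) (gr_unit K)"
    and lc_mul_cont: "continuous_map (subtopology (prod_topology (gr_arr K) (gr_arr K)) (composable K))
        (gr_arr K) (\<lambda>(g, h). gr_mul K g h)"
    and lc_inv_cont: "continuous_map (gr_arr K) (gr_arr K) (gr_inv K)"
    and lc_arr_Hausdorff: "Hausdorff_space (gr_arr K)"
    and lc_arr_locally_compact: "locally_compact_space (gr_arr K)"
    and lc_obj_Hausdorff: "Hausdorff_space (gr_obj K)"
    and lc_obj_locally_compact: "locally_compact_space (gr_obj K)"
  using assms unfolding lc_groupoid_def topological_groupoid_def by auto

lemma continuous_map_gr_mul:
  assumes K: "topological_groupoid K"
    and f: "continuous_map Z (gr_arr K) f" and g: "continuous_map Z (gr_arr K) g"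
    and c: "\<And>z. z \<in> topspace Z \<Longrightarrow> gr_src K (f z) = gr_rng K (g z)"
  shows "continuous_map Z (gr_arr K) (\<lambda>z. gr_mul K (f z) (g z))"
proof -
  have "continuous_map (subtopology (prod_topology (gr_arr K) (gr_arr K)) (composable K))
      (gr_arr K) (\<lambda>(g, h). gr_mul K g h)"
    using K by (simp add: topological_groupoid_def)
  then show ?thesis
    by (rule continuous_map_apply2[OF _ f g]) (use c continuous_map_in[OF f] continuous_map_in[OF g] in \<open>auto simp: composable_def garr_def\<close>)
qed

lemma composable_subset: "composable K \<subseteq> garr K \<times> garr K"
  by (auto simp: composable_def)

section \<open>Quotient spaces\<close>

lemma cls_iff: "x \<in> cls R y \<longleftrightarrow> (y, x) \<in> R" by (simp add: cls_def)

locale equiv_quotient =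
  fixes X :: "'a topology" and R :: "('a \<times> 'a) set"
  assumes eqv: "equiv (topspace X) R"
begin

abbreviation "Q \<equiv> quotient_topology X R"
abbreviation "q \<equiv> cls R"

lemma R_sub: "(x, y) \<in> R \<Longrightarrow> x \<in> topspace X \<and> y \<in> topspace X"
  using eqv unfolding equiv_def refl_on_def by auto

lemma R_refl: "x \<in> topspace X \<Longrightarrow> (x, x) \<in> R"
  using eqv unfolding equiv_def refl_on_def by auto

lemma R_sym: "(x, y) \<in> R \<Longrightarrow> (y, x) \<in> R"
  using eqv unfolding equiv_def sym_def by auto

lemma q_in: "x \<in> topspace X \<Longrightarrow> q x \<in> topspace X // R"
  by (simp add: cls_def quotientI)

lemma q_eq: "x \<in> topspace X \<Longrightarrow> y \<in> topspace X \<Longrightarrow> q x = q y \<longleftrightarrow> (x, y) \<in> R"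
  unfolding cls_def using eqv by (simp add: equiv_class_eq_iff)

lemma q_eqI: "(x, y) \<in> R \<Longrightarrow> q x = q y"
  using q_eq R_sub by blast

lemma quot_cases: "A \<in> topspace X // R \<Longrightarrow> (\<And>x. x \<in> topspace X \<Longrightarrow> A = q x \<Longrightarrow> P) \<Longrightarrow> P"
  unfolding cls_def by (auto elim: quotientE)

lemma rep_in: "A \<in> topspace X // R \<Longrightarrow> rep A \<in> A"
  unfolding rep_def by (metis someI_ex eqv equiv_def quotient_def refl_on_def
      Image_singleton_iff UnionE in_quotient_imp_non_empty ex_in_conv)

lemma rep_R: "x \<in> topspace X \<Longrightarrow> (x, rep (q x)) \<in> R"
  using rep_in[OF q_in] by (simp add: cls_iff)

lemma mem_cls: "A \<in> topspace X // R \<Longrightarrow> x \<in> A \<Longrightarrow> A = q x"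
  by (metis quot_cases q_eqI cls_iff)

lemma Union_sub: "U \<subseteq> topspace X // R \<Longrightarrow> \<Union>U \<subseteq> topspace X"
  unfolding quotient_def using R_sub by blast

lemma generate_topology_quotient_iff: "generate_topology_on {U. U \<subseteq> topspace X // R \<and> openin X (\<Union>U)} W \<longleftrightarrow>
    W \<subseteq> topspace X // R \<and> openin X (\<Union>W)"
proof
  assume "generate_topology_on {U. U \<subseteq> topspace X // R \<and> openin X (\<Union>U)} W"
  then show "W \<subseteq> topspace X // R \<and> openin X (\<Union>W)"
  proof induction
    case (Int a b)
    have "\<Union>(a \<inter> b) = \<Union>a \<inter> \<Union>b"
    proof
      show "\<Union>a \<inter> \<Union>b \<subseteq> \<Union>(a \<inter> b)"
      proof
        fix x assume "x \<in> \<Union>a \<inter> \<Union>b"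
        then obtain A B where AB: "A \<in> a" "B \<in> b" "x \<in> A" "x \<in> B" by auto
        then have "A = q x" "B = q x" using Int mem_cls by blast+
        then show "x \<in> \<Union>(a \<inter> b)" using AB by auto
      qed
    qed auto
    then show ?case using Int by auto
  next
    case (UN K)
    have e: "\<Union>(\<Union>K) = \<Union>((\<lambda>k. \<Union>k) ` K)" by auto
    have "openin X (\<Union>((\<lambda>k. \<Union>k) ` K))" using UN by (intro openin_Union) auto
    then show ?case using UN e by auto
  qed auto
qed (auto intro: generate_topology_on.Basis)

lemma openin_Q: "openin Q W \<longleftrightarrow> W \<subseteq> topspace X // R \<and> openin X (\<Union>W)"
  unfolding quotient_topology_def openin_topology_generated_by_iff generate_topology_quotient_iff ..

lemma topspace_Q[simp]: "topspace Q = topspace X // R"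
proof -
  have "openin Q (topspace X // R)"
    unfolding openin_Q using eqv by (simp add: Union_quotient)
  then have "topspace X // R \<subseteq> topspace Q" by (simp add: openin_subset)
  moreover have "topspace Q \<subseteq> topspace X // R" using openin_Q openin_topspace by blast
  ultimately show ?thesis by blast
qed

lemma preim_q: "U \<subseteq> topspace X // R \<Longrightarrow> {x \<in> topspace X. q x \<in> U} = \<Union>U"
proof
  assume U: "U \<subseteq> topspace X // R"
  show "\<Union>U \<subseteq> {x \<in> topspace X. q x \<in> U}"
  proof
    fix x assume "x \<in> \<Union>U"
    then obtain A where "A \<in> U" "x \<in> A" by auto
    then show "x \<in> {x \<in> topspace X. q x \<in> U}"
      using U mem_cls Union_sub by (metis (no_types, lifting) Union_iff mem_Collect_eq subsetD)
  qed
  show "{x \<in> topspace X. q x \<in> U} \<subseteq> \<Union>U"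
    using R_refl by (auto simp: cls_iff)
qed

lemma q_cont: "continuous_map X Q q"
  unfolding continuous_map_def
proof (intro conjI allI impI)
  show "q \<in> topspace X \<rightarrow> topspace Q" using q_in by auto
  fix U assume "openin Q U"
  then show "openin X {x \<in> topspace X. q x \<in> U}" by (simp add: openin_Q preim_q)
qed

lemma q_surj: "q ` topspace X = topspace Q"
  by (auto elim: quot_cases intro: q_in)

lemma sat_eq: "V \<subseteq> topspace X \<Longrightarrow> \<Union>(q ` V) = R `` V"
  unfolding cls_def by auto

lemma q_open:
  assumes "\<And>V. openin X V \<Longrightarrow> openin X (R `` V)"
  shows "open_map X Q q"
  unfolding open_map_def
proof (intro allI impI)
  fix V assume V: "openin X V"
  have "q ` V \<subseteq> topspace X // R" using q_in openin_subset[OF V] by auto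
  then show "openin Q (q ` V)" unfolding openin_Q using sat_eq openin_subset[OF V] assms[OF V] by simp
qed

lemma open_map_factor:
  assumes F: "open_map X Y F" and f: "\<And>x. x \<in> topspace X \<Longrightarrow> f (q x) = F x"
  shows "open_map Q Y f"
  unfolding open_map_def
proof (intro allI impI)
  fix U assume "openin Q U"
  then have U: "U \<subseteq> topspace X // R" "openin X (\<Union>U)" by (simp_all add: openin_Q)
  have "f ` U = F ` \<Union>U"
  proof (intro equalityI subsetI)
    fix y assume "y \<in> f ` U"
    then obtain A where A: "A \<in> U" "y = f A" by auto
    then obtain x where x: "x \<in> topspace X" "A = q x" using U quot_cases by blast
    then have "x \<in> A" using R_refl by (simp add: cls_iff)
    then show "y \<in> F ` \<Union>U" using A x f by force
  next
    fix y assume "y \<in> F ` \<Union>U"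
    then obtain A x where A: "A \<in> U" "x \<in> A" "y = F x" by auto
    then have "A = q x" "x \<in> topspace X" using U mem_cls Union_sub by blast+
    then show "y \<in> f ` U" using A f by force
  qed
  then show "openin Y (f ` U)" using F U(2) by (simp add: open_map_def)
qed

lemma Hausdorff_space_quotient:
  assumes q_open: "open_map X Q q" and R_closed: "closedin (prod_topology X X) R"
  shows "Hausdorff_space Q"
  unfolding Hausdorff_space_def
proof (intro allI impI, elim conjE)
  fix A B assume AB: "A \<in> topspace Q" "B \<in> topspace Q" "A \<noteq> B"
  obtain x where x: "x \<in> topspace X" "A = q x" using AB(1) quot_cases by auto
  obtain y where y: "y \<in> topspace X" "B = q y" using AB(2) quot_cases by auto
  have "openin (prod_topology X X) (topspace (prod_topology X X) - R)"
    using R_closed by (simp add: closedin_def)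
  moreover have "(x, y) \<in> topspace (prod_topology X X) - R" using AB(3) x y q_eqI by auto
  ultimately have "\<exists>U V. openin X U \<and> openin X V \<and> x \<in> U \<and> y \<in> V \<and>
      U \<times> V \<subseteq> topspace (prod_topology X X) - R"
    by (rule openin_prod_topology_alt[THEN iffD1, rule_format])
  then obtain U V where UV: "openin X U" "openin X V" "x \<in> U" "y \<in> V"
    "U \<times> V \<subseteq> topspace (prod_topology X X) - R" by blast
  have "q u \<noteq> q v" if "u \<in> U" "v \<in> V" for u v
  proof
    assume "q u = q v"
    moreover have "u \<in> topspace X" "v \<in> topspace X"
      using that UV(1,2) by (meson openin_subset subsetD)+
    ultimately have "(u, v) \<in> R" using q_eq by simp
    then show False using that UV(5) by auto
  qed
  then have "disjnt (q ` U) (q ` V)" by (auto simp: disjnt_def)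
  moreover have "openin Q (q ` U)" "openin Q (q ` V)" using q_open UV(1,2) by (simp_all add: open_map_def)
  ultimately show "\<exists>U V. openin Q U \<and> openin Q V \<and> A \<in> U \<and> B \<in> V \<and> disjnt U V"
    using UV(3,4) x(2) y(2) by blast
qed

end

locale pushout_construction = G: groupoid_laws G + H: groupoid_laws H + T: groupoid_laws T
  for G :: "('g, 'u) groupoid" and H :: "('h, 'u) groupoid" and T :: "('t, 'u) groupoid" +
  fixes p :: "'g \<Rightarrow> 'h" and a :: "'h \<Rightarrow> 't \<Rightarrow> 't" and phi :: "'g \<Rightarrow> 't"
  assumes ext: "groupoid_extension G H p"
    and Tbun: "lc_group_bundle T" and abel: "abelian_bundle T"
    and units: "gr_obj T = gr_obj G"
    and act: "bundle_action H T a"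
    and morph: "bundle_morphism G (ext_kernel G H p) T phi"
    and equiv: "\<forall>g\<in>garr G. \<forall>s\<in>ext_kernel G H p. gr_src G g = gr_rng G s \<longrightarrow>
                   phi (gr_mul G (gr_mul G g s) (gr_inv G g)) = a (p g) (phi s)"
begin

abbreviation "S \<equiv> ext_kernel G H p"

lemma objGH: "gr_obj H = gr_obj G" using ext unfolding groupoid_extension_def by simp
lemma obj_eqs[simp]: "gobj H = gobj G" "gobj T = gobj G"
  using objGH units by (simp_all add: gobj_def)

lemma H_obj'[simp]: "h \<in> H.arr \<Longrightarrow> H.sr h \<in> G.obj" "h \<in> H.arr \<Longrightarrow> H.rg h \<in> G.obj"
  and T_obj'[simp]: "t \<in> T.arr \<Longrightarrow> T.sr t \<in> G.obj" "t \<in> T.arr \<Longrightarrow> T.rg t \<in> G.obj"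
  using H.sr_obj H.rg_obj T.sr_obj T.rg_obj by auto

lemma p_hom: "hom_over G H p" using ext unfolding groupoid_extension_def by simp

lemma p_arr[simp]: "g \<in> G.arr \<Longrightarrow> p g \<in> H.arr"
  and p_rg[simp]: "g \<in> G.arr \<Longrightarrow> H.rg (p g) = G.rg g"
  and p_sr[simp]: "g \<in> G.arr \<Longrightarrow> H.sr (p g) = G.sr g"
  using hom_over_arr[OF p_hom] hom_over_rg[OF p_hom] hom_over_sr[OF p_hom] by blast+

lemma p_mul[simp]: "g \<in> G.arr \<Longrightarrow> h \<in> G.arr \<Longrightarrow> G.sr g = G.rg h \<Longrightarrow> p (G.m g h) = H.m (p g) (p h)"
  by (rule hom_over_mul[OF p_hom])

lemma p_unit[simp]: "x \<in> G.obj \<Longrightarrow> p (G.un x) = H.un x"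
  by (rule hom_over_unit[OF G.groupoid H.groupoid p_hom])

lemma p_inv[simp]: "g \<in> G.arr \<Longrightarrow> p (G.iv g) = H.iv (p g)"
  by (rule hom_over_inv[OF G.groupoid H.groupoid p_hom])

lemma p_surj: "p ` G.arr = H.arr" using ext unfolding groupoid_extension_def by simp

lemma T_iso[simp]: "t \<in> T.arr \<Longrightarrow> T.sr t = T.rg t"
  using Tbun unfolding lc_group_bundle_def by metis

lemma T_comm: "t \<in> T.arr \<Longrightarrow> t' \<in> T.arr \<Longrightarrow> T.rg t = T.rg t' \<Longrightarrow> T.m t t' = T.m t' t"
  using abel unfolding abelian_bundle_def by blast

lemma T_mul_rearrange:
  assumes "x \<in> T.arr" "y \<in> T.arr" "z \<in> T.arr" "w \<in> T.arr"
    "T.rg x = c" "T.rg y = c" "T.rg z = c" "T.rg w = c"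
  shows "T.m (T.m x y) (T.m z w) = T.m (T.m x z) (T.m w y)"
proof -
  have "T.m (T.m x y) (T.m z w) = T.m x (T.m y (T.m z w))" using assms by (intro T.assoc) auto
  also have "T.m y (T.m z w) = T.m (T.m z w) y" using assms by (intro T_comm) auto
  also have "T.m (T.m z w) y = T.m z (T.m w y)" using assms by (intro T.assoc) auto
  also have "T.m x (T.m z (T.m w y)) = T.m (T.m x z) (T.m w y)" using assms by (intro T.assoc[symmetric]) auto
  finally show ?thesis .
qed

lemma a_arr[simp]: "h \<in> H.arr \<Longrightarrow> t \<in> T.arr \<Longrightarrow> H.sr h = T.rg t \<Longrightarrow> a h t \<in> T.arr"
  and a_rg[simp]: "h \<in> H.arr \<Longrightarrow> t \<in> T.arr \<Longrightarrow> H.sr h = T.rg t \<Longrightarrow> T.rg (a h t) = H.rg h"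
  using act unfolding bundle_action_def by blast+

lemma a_un[simp]: "t \<in> T.arr \<Longrightarrow> x = T.rg t \<Longrightarrow> a (H.un x) t = t"
  using act unfolding bundle_action_def by auto

lemma a_comp: "h \<in> H.arr \<Longrightarrow> k \<in> H.arr \<Longrightarrow> t \<in> T.arr \<Longrightarrow> H.sr h = H.rg k \<Longrightarrow> H.sr k = T.rg t \<Longrightarrow>
   a (H.m h k) t = a h (a k t)"
  using act unfolding bundle_action_def by auto

lemma a_mul: "h \<in> H.arr \<Longrightarrow> t \<in> T.arr \<Longrightarrow> t' \<in> T.arr \<Longrightarrow> H.sr h = T.rg t \<Longrightarrow> T.rg t' = T.rg t \<Longrightarrow>
   a h (T.m t t') = T.m (a h t) (a h t')"
  using act unfolding bundle_action_def by auto

lemma a_cont: "continuous_map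
       (subtopology (prod_topology (gr_arr H) (gr_arr T))
          {(h, t). h \<in> garr H \<and> t \<in> garr T \<and> gr_src H h = gr_rng T t})
       (gr_arr T) (\<lambda>(h, t). a h t)"
  using act unfolding bundle_action_def by auto

lemma a_unitT[simp]: "h \<in> H.arr \<Longrightarrow> x = H.sr h \<Longrightarrow> a h (T.un x) = T.un (H.rg h)"
proof -
  assume h: "h \<in> H.arr" "x = H.sr h"
  then have x: "x \<in> T.obj" by simp
  have "a h (T.un x) = a h (T.m (T.un x) (T.un x))" using x by simp
  also have "\<dots> = T.m (a h (T.un x)) (a h (T.un x))" using h x by (intro a_mul) auto
  finally have e: "a h (T.un x) = T.m (a h (T.un x)) (a h (T.un x))" .
  have "a h (T.un x) \<in> T.arr" "T.sr (a h (T.un x)) = T.rg (a h (T.un x))" "T.rg (a h (T.un x)) = H.rg h"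
    using h x by auto
  then show ?thesis using T.idem_unit[of "a h (T.un x)"] e by metis
qed

lemma a_inv[simp]: "h \<in> H.arr \<Longrightarrow> t \<in> T.arr \<Longrightarrow> H.sr h = T.rg t \<Longrightarrow> a h (T.iv t) = T.iv (a h t)"
proof -
  assume h: "h \<in> H.arr" "t \<in> T.arr" "H.sr h = T.rg t"
  have "T.m (a h t) (a h (T.iv t)) = a h (T.m t (T.iv t))" using h by (intro a_mul[symmetric]) auto
  also have "\<dots> = T.un (T.rg (a h t))" using h by simp
  finally show ?thesis using h by (intro T.inv_unique) auto
qed

lemma a_inv_h[simp]: "h \<in> H.arr \<Longrightarrow> t \<in> T.arr \<Longrightarrow> H.sr h = T.rg t \<Longrightarrow> a (H.iv h) (a h t) = t"
proof -
  assume h: "h \<in> H.arr" "t \<in> T.arr" "H.sr h = T.rg t"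
  have "a (H.iv h) (a h t) = a (H.m (H.iv h) h) t" using h by (intro a_comp[symmetric]) auto
  also have "\<dots> = t" using h by simp
  finally show ?thesis .
qed

lemma a_inv_h'[simp]: "h \<in> H.arr \<Longrightarrow> t \<in> T.arr \<Longrightarrow> H.rg h = T.rg t \<Longrightarrow> a h (a (H.iv h) t) = t"
  using a_inv_h[of "H.iv h" t] by simp

lemma S_arr: "s \<in> S \<Longrightarrow> s \<in> G.arr" and S_p: "s \<in> S \<Longrightarrow> p s = H.un (G.rg s)"
  unfolding ext_kernel_def by auto

lemma S_iso: "s \<in> S \<Longrightarrow> G.sr s = G.rg s"
proof -
  assume s: "s \<in> S"
  have "G.sr s = H.sr (p s)" using s S_arr by simp
  also have "\<dots> = G.rg s" using S_p[OF s] S_arr[OF s] by simp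
  finally show ?thesis .
qed

lemma S_I: "g \<in> G.arr \<Longrightarrow> p g = H.un (G.rg g) \<Longrightarrow> g \<in> S"
  unfolding ext_kernel_def by auto

lemma S_unit[simp]: "x \<in> G.obj \<Longrightarrow> G.un x \<in> S"
  by (rule S_I) auto

lemma S_mul: "s \<in> S \<Longrightarrow> s' \<in> S \<Longrightarrow> G.sr s = G.rg s' \<Longrightarrow> G.m s s' \<in> S"
  by (rule S_I) (auto simp: S_arr S_p S_iso)

lemma S_inv: "s \<in> S \<Longrightarrow> G.iv s \<in> S"
  by (rule S_I) (auto simp: S_arr S_p S_iso)

lemma S_conj: "g \<in> G.arr \<Longrightarrow> s \<in> S \<Longrightarrow> G.sr g = G.rg s \<Longrightarrow> G.m (G.m g s) (G.iv g) \<in> S"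
proof (rule S_I)
  assume h: "g \<in> G.arr" "s \<in> S" "G.sr g = G.rg s"
  have s: "s \<in> G.arr" "G.sr s = G.rg s" using h S_arr S_iso by auto
  show "G.m (G.m g s) (G.iv g) \<in> G.arr" using h s by simp
  have "p (G.m (G.m g s) (G.iv g)) = H.m (H.m (p g) (p s)) (H.iv (p g))" using h s by simp
  also have "\<dots> = H.m (p g) (H.iv (p g))" using h s S_p by simp
  also have "\<dots> = H.un (G.rg g)" using h by simp
  finally show "p (G.m (G.m g s) (G.iv g)) = H.un (G.rg (G.m (G.m g s) (G.iv g)))" using h s by simp
qed

lemma S_diff: "g \<in> G.arr \<Longrightarrow> h \<in> G.arr \<Longrightarrow> G.sr g = G.sr h \<Longrightarrow> p g = p h \<Longrightarrow> G.m g (G.iv h) \<in> S"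
proof (rule S_I)
  assume a: "g \<in> G.arr" "h \<in> G.arr" "G.sr g = G.sr h" "p g = p h"
  have r: "G.rg g = G.rg h" using p_rg[OF a(1)] p_rg[OF a(2)] a(4) by simp
  show "G.m g (G.iv h) \<in> G.arr" using a(1-3) by simp
  have "p (G.m g (G.iv h)) = H.m (p g) (H.iv (p h))" using a(1-3) by simp
  also have "\<dots> = H.m (p h) (H.iv (p h))" using a(4) by simp
  also have "\<dots> = H.un (G.rg h)" using a(2) by simp
  finally show "p (G.m g (G.iv h)) = H.un (G.rg (G.m g (G.iv h)))"
    using a(1-3) r by simp
qed

lemma a_S[simp]: "s \<in> S \<Longrightarrow> t \<in> T.arr \<Longrightarrow> T.rg t = G.sr s \<Longrightarrow> a (p s) t = t"
  using S_p S_iso by simp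

lemma phi_arr[simp]: "s \<in> S \<Longrightarrow> phi s \<in> T.arr"
  and phi_rg[simp]: "s \<in> S \<Longrightarrow> T.rg (phi s) = G.rg s"
  using morph unfolding bundle_morphism_def by auto

lemma phi_mul: "s \<in> S \<Longrightarrow> s' \<in> S \<Longrightarrow> G.rg s = G.rg s' \<Longrightarrow> phi (G.m s s') = T.m (phi s) (phi s')"
  using morph unfolding bundle_morphism_def by auto

lemma phi_cont: "continuous_map (subtopology (gr_arr G) S) (gr_arr T) phi"
  using morph unfolding bundle_morphism_def by auto

lemma phi_unit[simp]: "x \<in> G.obj \<Longrightarrow> phi (G.un x) = T.un x"
proof -
  assume x: "x \<in> G.obj"
  have "phi (G.un x) = phi (G.m (G.un x) (G.un x))" using x by simp
  also have "\<dots> = T.m (phi (G.un x)) (phi (G.un x))" using x by (intro phi_mul) auto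
  finally have e: "phi (G.un x) = T.m (phi (G.un x)) (phi (G.un x))" .
  have "phi (G.un x) \<in> T.arr" "T.sr (phi (G.un x)) = T.rg (phi (G.un x))" "T.rg (phi (G.un x)) = x"
    using x by auto
  then show ?thesis using T.idem_unit[of "phi (G.un x)"] e by metis
qed

lemma phi_inv[simp]: "s \<in> S \<Longrightarrow> phi (G.iv s) = T.iv (phi s)"
proof -
  assume s: "s \<in> S"
  have s': "s \<in> G.arr" "G.sr s = G.rg s" using s S_arr S_iso by auto
  have "T.m (phi s) (phi (G.iv s)) = phi (G.m s (G.iv s))" using s s' S_inv by (intro phi_mul[symmetric]) auto
  also have "\<dots> = T.un (T.rg (phi s))" using s s' by simp
  finally show ?thesis using s s' S_inv by (intro T.inv_unique) auto
qed

lemma phi_equiv: "g \<in> G.arr \<Longrightarrow> s \<in> S \<Longrightarrow> G.sr g = G.rg s \<Longrightarrow>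
   phi (G.m (G.m g s) (G.iv g)) = a (p g) (phi s)"
  using equiv by blast

section \<open>The groupoid \<open>T * G\<close>\<close>

abbreviation "TGs \<equiv> TG_set T G"
abbreviation "TG \<equiv> TG_groupoid G p T a"

lemma mem_TGs[simp]: "(t, g) \<in> TGs \<longleftrightarrow> t \<in> T.arr \<and> g \<in> G.arr \<and> T.rg t = G.rg g"
  by (simp add: TG_set_def)

lemma TGs_sub: "TGs \<subseteq> T.arr \<times> G.arr" by (auto simp: TG_set_def)

lemma TGs_Int[simp]: "T.arr \<times> G.arr \<inter> TGs = TGs" using TGs_sub by blast

lemma TG_simps[simp]:
  "gr_arr TG = subtopology (prod_topology (gr_arr T) (gr_arr G)) TGs"
  "gr_obj TG = gr_obj G"
  "gr_rng TG = (\<lambda>(t, g). G.rg g)"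
  "gr_src TG = (\<lambda>(t, g). G.sr g)"
  "gr_unit TG = (\<lambda>x. (T.un x, G.un x))"
  "gr_mul TG = (\<lambda>(t, g) (t', g'). (T.m t (a (p g) t'), G.m g g'))"
  "gr_inv TG = (\<lambda>(t, g). (a (p (G.iv g)) (T.iv t), G.iv g))"
  by (simp_all add: TG_groupoid_def)

lemma garr_TG[simp]: "garr TG = TGs"
  using TGs_sub by (auto simp: garr_def)

lemma gobj_TG[simp]: "gobj TG = G.obj"
  by (simp add: gobj_def)

lemma TG_assoc:
  assumes x: "(t, g) \<in> TGs" "(t', g') \<in> TGs" "(t'', g'') \<in> TGs" "G.sr g = G.rg g'" "G.sr g' = G.rg g''"
  shows "T.m (T.m t (a (p g) t')) (a (p (G.m g g')) t'') = T.m t (a (p g) (T.m t' (a (p g') t'')))"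
proof -
  have t: "t \<in> T.arr" "t' \<in> T.arr" "t'' \<in> T.arr" "g \<in> G.arr" "g' \<in> G.arr" "g'' \<in> G.arr"
    "T.rg t = G.rg g" "T.rg t' = G.rg g'" "T.rg t'' = G.rg g''" using x by auto
  have e1: "a (p (G.m g g')) t'' = a (p g) (a (p g') t'')"
    using t x(4,5) by (simp add: a_comp)
  have e2: "a (p g) (T.m t' (a (p g') t'')) = T.m (a (p g) t') (a (p g) (a (p g') t''))"
    using t x(4,5) by (intro a_mul) auto
  show ?thesis unfolding e1 e2 using t x(4,5) by (intro T.assoc) auto
qed

lemma TG_inv_laws:
  assumes "(t, g) \<in> TGs"
  shows "T.m t (a (p g) (a (p (G.iv g)) (T.iv t))) = T.un (G.rg g)"
    and "T.m (a (p (G.iv g)) (T.iv t)) (a (p (G.iv g)) t) = T.un (G.sr g)"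
proof -
  have m: "t \<in> T.arr" "g \<in> G.arr" "T.rg t = G.rg g" using assms by auto
  show "T.m t (a (p g) (a (p (G.iv g)) (T.iv t))) = T.un (G.rg g)"
    using m a_inv_h'[of "p g" "T.iv t"] by simp
  have "T.m (a (p (G.iv g)) (T.iv t)) (a (p (G.iv g)) t) = a (p (G.iv g)) (T.m (T.iv t) t)"
    using m by (intro a_mul[symmetric]) auto
  also have "\<dots> = T.un (G.sr g)" using m by simp
  finally show "T.m (a (p (G.iv g)) (T.iv t)) (a (p (G.iv g)) t) = T.un (G.sr g)" .
qed

lemma is_groupoid_TG: "is_groupoid TG"
  unfolding is_groupoid_def Ball_def split_paired_All
  by (auto simp: TG_assoc G.assoc TG_inv_laws simp del: TG_simps(1) p_mul)

lemma G_lc: "lc_groupoid G" and H_lc: "lc_groupoid H" and T_lc: "lc_groupoid T"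
  using ext Tbun unfolding groupoid_extension_def lc_group_bundle_def by auto

abbreviation "XG \<equiv> gr_arr G"
abbreviation "XH \<equiv> gr_arr H"
abbreviation "XT \<equiv> gr_arr T"
abbreviation "OG \<equiv> gr_obj G"
abbreviation "XTG \<equiv> gr_arr TG"

lemma topspace_XTG[simp]: "topspace XTG = TGs"
  using garr_TG by (simp add: garr_def)

lemma tsG[simp]: "topspace XG = G.arr" and tsH[simp]: "topspace XH = H.arr" and tsT[simp]: "topspace XT = T.arr"
  and tsO[simp]: "topspace OG = G.obj"
  by (simp_all add: garr_def gobj_def)

lemma comp_TG: "composable TG = {((t,g),(t',g')). (t,g) \<in> TGs \<and> (t',g') \<in> TGs \<and> G.sr g = G.rg g'}"
  by (auto simp: composable_def simp del: mem_TGs)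

lemma cont_p: "continuous_map XG XH p" using ext unfolding groupoid_extension_def by simp
lemma open_p: "open_map XG XH p" using ext unfolding groupoid_extension_def by simp

lemma TGs_closed: "closedin (prod_topology XT XG) TGs"
proof -
  have "closedin (prod_topology XT XG) {z \<in> topspace (prod_topology XT XG). T.rg (fst z) = G.rg (snd z)}"
    by (rule closedin_continuous_maps_eq[OF lc_obj_Hausdorff[OF G_lc]])
      (auto intro: continuous_map_comp[OF continuous_map_fst lc_rng_cont[OF T_lc, unfolded units]] continuous_map_comp[OF continuous_map_snd lc_rng_cont[OF G_lc]])
  moreover have "{z \<in> topspace (prod_topology XT XG). T.rg (fst z) = G.rg (snd z)} = TGs"
    by (auto simp: TG_set_def)
  ultimately show ?thesis by simp
qed

lemma XTG_lc: "locally_compact_space XTG"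
  unfolding TG_simps
  by (rule locally_compact_space_closed_subset[OF _ TGs_closed])
     (simp add: locally_compact_space_prod_topology lc_arr_locally_compact[OF G_lc] lc_arr_locally_compact[OF T_lc])

lemma XTG_haus: "Hausdorff_space XTG"
  unfolding TG_simps
  by (rule Hausdorff_space_subtopology) (simp add: Hausdorff_space_prod_topology lc_arr_Hausdorff[OF G_lc] lc_arr_Hausdorff[OF T_lc])

lemma cont_fstTG: "continuous_map XTG XT fst" unfolding TG_simps by (rule continuous_map_fst_sub)
lemma cont_sndTG: "continuous_map XTG XG snd" unfolding TG_simps by (rule continuous_map_snd_sub)

lemma cont_into_TG:
  assumes "continuous_map Z XT f1" "continuous_map Z XG f2" "\<And>z. z \<in> topspace Z \<Longrightarrow> (f1 z, f2 z) \<in> TGs"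
  shows "continuous_map Z XTG (\<lambda>z. (f1 z, f2 z))"
  unfolding TG_simps using assms
  by (auto simp: continuous_map_in_subtopology continuous_map_paired simp del: mem_TGs)

lemma cont_act:
  assumes "continuous_map Z XG f1" "continuous_map Z XT f2" "\<And>z. z \<in> topspace Z \<Longrightarrow> G.sr (f1 z) = T.rg (f2 z)"
  shows "continuous_map Z XT (\<lambda>z. a (p (f1 z)) (f2 z))"
proof -
  have "\<And>z. z \<in> topspace Z \<Longrightarrow> f1 z \<in> G.arr \<and> f2 z \<in> T.arr"
    using continuous_map_in[OF assms(1)] continuous_map_in[OF assms(2)] by simp
  then show ?thesis
    by (intro continuous_map_apply2[OF a_cont continuous_map_comp[OF assms(1) cont_p] assms(2)]) (use assms(3) in auto)
qed

lemma cont_mulT: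
  assumes "continuous_map Z XT f1" "continuous_map Z XT f2" "\<And>z. z \<in> topspace Z \<Longrightarrow> T.rg (f1 z) = T.rg (f2 z)"
  shows "continuous_map Z XT (\<lambda>z. T.m (f1 z) (f2 z))"
  by (rule continuous_map_gr_mul[OF lc_topological[OF T_lc] assms(1,2)])
     (use assms(3) continuous_map_in[OF assms(1)] in simp)

lemmas cont_mulG = continuous_map_gr_mul[OF lc_topological[OF G_lc]]

lemma cont_invG: "continuous_map Z XG f \<Longrightarrow> continuous_map Z XG (\<lambda>z. G.iv (f z))"
  by (rule continuous_map_comp[OF _ lc_inv_cont[OF G_lc]])
lemma cont_invT: "continuous_map Z XT f \<Longrightarrow> continuous_map Z XT (\<lambda>z. T.iv (f z))"
  by (rule continuous_map_comp[OF _ lc_inv_cont[OF T_lc]])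

lemma topological_groupoid_TG: "topological_groupoid TG"
  unfolding topological_groupoid_def
proof (intro conjI)
  show "is_groupoid TG" by (rule is_groupoid_TG)
  show "continuous_map (gr_arr TG) (gr_obj TG) (gr_rng TG)"
    using continuous_map_comp[OF cont_sndTG lc_rng_cont[OF G_lc]] by (simp add: case_prod_unfold)
  show "continuous_map (gr_arr TG) (gr_obj TG) (gr_src TG)"
    using continuous_map_comp[OF cont_sndTG lc_src_cont[OF G_lc]] by (simp add: case_prod_unfold)
  show "continuous_map (gr_obj TG) (gr_arr TG) (gr_unit TG)"
    by (simp only: TG_simps(2,5)) (rule cont_into_TG[OF lc_unit_cont[OF T_lc, unfolded units] lc_unit_cont[OF G_lc]], simp)
  let ?Z = "subtopology (prod_topology (gr_arr TG) (gr_arr TG)) (composable TG)"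
  have tz: "topspace ?Z = composable TG" using composable_subset[of TG] by auto
  have c1: "continuous_map ?Z XTG fst" "continuous_map ?Z XTG snd" by (rule continuous_map_fst_sub continuous_map_snd_sub)+
  have cc: "continuous_map ?Z XT (\<lambda>z. fst (fst z))" "continuous_map ?Z XG (\<lambda>z. snd (fst z))"
     "continuous_map ?Z XT (\<lambda>z. fst (snd z))" "continuous_map ?Z XG (\<lambda>z. snd (snd z))"
    by (rule continuous_map_comp[OF c1(1) cont_fstTG] continuous_map_comp[OF c1(1) cont_sndTG] continuous_map_comp[OF c1(2) cont_fstTG] continuous_map_comp[OF c1(2) cont_sndTG])+
  have "continuous_map ?Z XTG (\<lambda>z. (T.m (fst (fst z)) (a (p (snd (fst z))) (fst (snd z))), G.m (snd (fst z)) (snd (snd z))))"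
  proof (rule cont_into_TG)
    show "continuous_map ?Z XT (\<lambda>z. T.m (fst (fst z)) (a (p (snd (fst z))) (fst (snd z))))"
      by (intro cont_mulT cc cont_act) (auto simp: tz comp_TG)
    show "continuous_map ?Z XG (\<lambda>z. G.m (snd (fst z)) (snd (snd z)))"
      by (intro cont_mulG cc) (auto simp: tz comp_TG)
  qed (auto simp: tz comp_TG)
  then show "continuous_map ?Z (gr_arr TG) (\<lambda>(g, h). gr_mul TG g h)"
    by (simp add: case_prod_unfold)
  have "continuous_map XTG XTG (\<lambda>z. (a (p (G.iv (snd z))) (T.iv (fst z)), G.iv (snd z)))"
    by (intro cont_into_TG cont_act cont_invG cont_invT cont_fstTG cont_sndTG) auto
  then show "continuous_map (gr_arr TG) (gr_arr TG) (gr_inv TG)"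
    by (simp add: case_prod_unfold)
qed

lemma lc_groupoid_TG: "lc_groupoid TG"
  unfolding lc_groupoid_def using topological_groupoid_TG XTG_lc XTG_haus lc_obj_locally_compact[OF G_lc] lc_obj_Hausdorff[OF G_lc] by simp

lemma openin_Image_by_sections:
  assumes W: "openin XTG W"
    and \<pi>: "continuous_map Y XH \<pi>"
    and \<sigma>: "continuous_map
      (subtopology (prod_topology Y XG) {(y, g). y \<in> topspace Y \<and> g \<in> G.arr \<and> \<pi> y = p g}) XT \<sigma>"
    and lifts: "\<And>y g. y \<in> topspace Y \<Longrightarrow> g \<in> G.arr \<Longrightarrow> \<pi> y = p g \<Longrightarrow>
      (\<sigma> (y, g), g) \<in> TGs \<and> ((\<sigma> (y, g), g), y) \<in> \<rho>"
    and retract: "\<And>t g y. (t, g) \<in> TGs \<Longrightarrow> ((t, g), y) \<in> \<rho> \<Longrightarrow>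
      y \<in> topspace Y \<and> \<pi> y = p g \<and> \<sigma> (y, g) = t"
  shows "openin Y (\<rho> `` W)"
  unfolding openin_subopen[of Y "\<rho> `` W"]
proof
  fix y0 assume "y0 \<in> \<rho> `` W"
  then obtain t0 g0 where x0: "(t0, g0) \<in> W" "((t0, g0), y0) \<in> \<rho>" by auto
  obtain W0 where W0: "openin (prod_topology XT XG) W0" "W = W0 \<inter> TGs"
    using W by (auto simp: openin_subtopology)
  have x0T: "(t0, g0) \<in> TGs" using x0 W0 by blast
  have y0: "y0 \<in> topspace Y" "\<pi> y0 = p g0" "\<sigma> (y0, g0) = t0" using retract[OF x0T x0(2)] by auto
  have "\<exists>A B. openin XT A \<and> openin XG B \<and> t0 \<in> A \<and> g0 \<in> B \<and> A \<times> B \<subseteq> W0"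
    using W0 x0 by (intro openin_prod_topology_alt[THEN iffD1, rule_format]) auto
  then obtain A0 B0 where AB0: "openin XT A0" "openin XG B0" "t0 \<in> A0" "g0 \<in> B0" "A0 \<times> B0 \<subseteq> W0"
    by blast
  \<comment> \<open>continuity of \<open>\<sigma>\<close> controls the \<open>T\<close>-coordinate, openness of \<open>p\<close> the \<open>G\<close>-coordinate\<close>
  obtain N1 B1 where NB: "openin Y N1" "openin XG B1" "y0 \<in> N1" "g0 \<in> B1"
    "\<And>y g. y \<in> N1 \<Longrightarrow> g \<in> B1 \<Longrightarrow> (y, g) \<in> {(y, g). y \<in> topspace Y \<and> g \<in> G.arr \<and> \<pi> y = p g} \<Longrightarrow>
       \<sigma> (y, g) \<in> A0"
    using continuous_map_box_nbhd[OF \<sigma> AB0(1), of y0 g0] y0 x0T AB0(3) by auto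
  define C where "C = B0 \<inter> B1"
  have C: "openin XG C" "g0 \<in> C" using AB0 NB by (auto simp: C_def)
  define N where "N = N1 \<inter> {y \<in> topspace Y. \<pi> y \<in> p ` C}"
  have N: "openin Y N"
    unfolding N_def using NB(1) C(1) open_p \<pi>
    by (intro openin_Int openin_continuous_map_preimage) (auto simp: open_map_def)
  have "y0 \<in> N" unfolding N_def using NB(3) C(2) y0 by auto
  moreover have "N \<subseteq> \<rho> `` W"
  proof
    fix y assume "y \<in> N"
    then obtain g where y: "y \<in> N1" "y \<in> topspace Y" "g \<in> C" "\<pi> y = p g" unfolding N_def by auto
    have g: "g \<in> G.arr" using y(3) C(1) openin_subset by fastforce
    have "\<sigma> (y, g) \<in> A0" using NB(5)[OF y(1)] y g by (simp add: C_def)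
    then have "(\<sigma> (y, g), g) \<in> W" using W0(2) AB0(5) y(3) lifts[OF y(2) g y(4)] by (auto simp: C_def)
    then show "y \<in> \<rho> `` W" using lifts[OF y(2) g y(4)] by blast
  qed
  ultimately show "\<exists>T. openin Y T \<and> y0 \<in> T \<and> T \<subseteq> \<rho> `` W" using N by blast
qed

section \<open>The embedding of \<open>S\<close> and the pushout relation\<close>

abbreviation "emb \<equiv> embS G phi"
abbreviation "R \<equiv> TG_rel G H p T phi"

lemma emb_simp: "emb s = (phi (G.iv s), s)" by (simp add: embS_def)

lemma emb_TGs: "s \<in> S \<Longrightarrow> emb s \<in> TGs"
  using S_inv[of s] S_arr[of s] S_iso[of s] by (simp add: emb_simp)

lemma S_closed: "closedin XG S"
proof -
  have "closedin XG {g \<in> topspace XG. p g = H.un (G.rg g)}"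
    by (rule closedin_continuous_maps_eq[OF lc_arr_Hausdorff[OF H_lc] cont_p continuous_map_comp[OF lc_rng_cont[OF G_lc] lc_unit_cont[OF H_lc, unfolded objGH]]])
  moreover have "{g \<in> topspace XG. p g = H.un (G.rg g)} = S" by (auto simp: ext_kernel_def)
  ultimately show ?thesis by simp
qed

lemma S_sub: "S \<subseteq> G.arr" using S_arr by blast

lemma cont_phi_inv: "continuous_map (subtopology XG S) XT (\<lambda>s. phi (G.iv s))"
proof -
  have "continuous_map (subtopology XG S) (subtopology XG S) G.iv"
    using S_inv by (auto simp: continuous_map_in_subtopology intro: continuous_map_from_subtopology[OF lc_inv_cont[OF G_lc]])
  then show ?thesis by (rule continuous_map_comp[OF _ phi_cont])
qed

lemma emb_homeomorphic: "homeomorphic_map (subtopology XG S) (subtopology XTG (emb ` S)) emb"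
  unfolding homeomorphic_map_maps
proof (intro exI[of _ snd], unfold homeomorphic_maps_def, intro conjI ballI)
  have tsS: "topspace (subtopology XG S) = S" using S_sub by auto
  have cs: "continuous_map (subtopology XG S) XTG emb"
    unfolding embS_def
    by (rule cont_into_TG[OF cont_phi_inv continuous_map_from_subtopology[OF continuous_map_id, unfolded id_def]])
       (use tsS emb_TGs in \<open>auto simp: emb_simp\<close>)
  then show "continuous_map (subtopology XG S) (subtopology XTG (emb ` S)) emb"
    by (auto simp: continuous_map_in_subtopology tsS)
  show "continuous_map (subtopology XTG (emb ` S)) (subtopology XG S) snd"
    unfolding continuous_map_in_subtopology
    by (intro conjI continuous_map_from_subtopology[OF cont_sndTG]) (auto simp: embS_def)
  show "\<And>x. x \<in> topspace (subtopology XG S) \<Longrightarrow> snd (emb x) = x" by (simp add: emb_simp)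
  show "\<And>y. y \<in> topspace (subtopology XTG (emb ` S)) \<Longrightarrow> emb (snd y) = y" by (auto simp: emb_simp)
qed

lemma emb_mul:
  assumes s: "s \<in> S" "s' \<in> S" "G.sr s = G.rg s'"
  shows "emb (G.m s s') = gr_mul TG (emb s) (emb s')"
proof -
  have a: "s \<in> G.arr" "s' \<in> G.arr" "G.sr s = G.rg s" "G.sr s' = G.rg s'" "G.iv s \<in> S" "G.iv s' \<in> S"
    using s S_arr S_iso S_inv by auto
  have "phi (G.iv (G.m s s')) = phi (G.m (G.iv s') (G.iv s))" by (simp only: G.inv_mul[OF a(1) a(2) s(3)])
  also have "\<dots> = T.m (phi (G.iv s')) (phi (G.iv s))" using a s(3) by (intro phi_mul) auto
  also have "\<dots> = T.m (phi (G.iv s)) (phi (G.iv s'))" using a s(3) by (intro T_comm) auto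
  finally have e: "phi (G.iv (G.m s s')) = T.m (phi (G.iv s)) (phi (G.iv s'))" .
  have "a (p s) (phi (G.iv s')) = phi (G.iv s')" using a s(1,3) by (intro a_S) auto
  then show ?thesis using e by (simp add: emb_simp)
qed

lemma emb_image: "emb ` S = {z \<in> TGs. snd z \<in> S \<and> fst z = phi (G.iv (snd z))}"
proof
  show "emb ` S \<subseteq> {z \<in> TGs. snd z \<in> S \<and> fst z = phi (G.iv (snd z))}"
    using emb_TGs by (auto simp: emb_simp simp del: mem_TGs)
  show "{z \<in> TGs. snd z \<in> S \<and> fst z = phi (G.iv (snd z))} \<subseteq> emb ` S"
  proof
    fix z assume z: "z \<in> {z \<in> TGs. snd z \<in> S \<and> fst z = phi (G.iv (snd z))}"
    then have "z = emb (snd z)" by (cases z) (simp add: emb_simp)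
    then show "z \<in> emb ` S" using z by blast
  qed
qed

lemma emb_closed: "closedin XTG (emb ` S)"
proof -
  let ?C = "{z \<in> topspace XTG. snd z \<in> S}"
  have C: "closedin XTG ?C" by (rule closedin_continuous_map_preimage[OF cont_sndTG S_closed])
  have cs: "continuous_map (subtopology XTG ?C) (subtopology XG S) snd"
    unfolding continuous_map_in_subtopology
    by (intro conjI continuous_map_from_subtopology[OF cont_sndTG]) auto
  have cl: "closedin (subtopology XTG ?C) {z \<in> topspace (subtopology XTG ?C). fst z = phi (G.iv (snd z))}"
    by (rule closedin_continuous_maps_eq[OF lc_arr_Hausdorff[OF T_lc] continuous_map_from_subtopology[OF cont_fstTG]
        continuous_map_comp[OF cs cont_phi_inv]])
  have e: "{z \<in> topspace (subtopology XTG ?C). fst z = phi (G.iv (snd z))} = emb ` S"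
    unfolding emb_image topspace_subtopology topspace_XTG by blast
  show ?thesis using closedin_trans_full[OF cl C] unfolding e .
qed

lemma emb_inv: "s \<in> S \<Longrightarrow> gr_inv TG (emb s) = emb (G.iv s)"
proof -
  assume s: "s \<in> S"
  have a: "s \<in> G.arr" "G.sr s = G.rg s" "G.iv s \<in> S" using s S_arr S_iso S_inv by auto
  have "a (p (G.iv s)) (T.iv (phi (G.iv s))) = T.iv (phi (G.iv s))"
    using a s by (intro a_S) auto
  also have "\<dots> = phi (G.iv (G.iv s))" using a s by simp
  finally show ?thesis by (simp add: emb_simp)
qed

lemma emb_conj:
  assumes x: "(t, g) \<in> TGs" and s: "s \<in> S" "G.sr g = G.rg s"
  shows "gr_mul TG (gr_mul TG (t, g) (emb s)) (gr_inv TG (t, g)) = emb (G.m (G.m g s) (G.iv g))"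
proof -
  have a: "s \<in> G.arr" "G.sr s = G.rg s" "G.iv s \<in> S" "t \<in> T.arr" "g \<in> G.arr" "T.rg t = G.rg g"
    using s x S_arr S_iso S_inv by auto
  have pc: "p (G.m g s) = p g" using a s S_p by simp
  have "phi (G.iv (G.m (G.m g s) (G.iv g))) = phi (G.m (G.m g (G.iv s)) (G.iv g))"
    using a s by (simp add: G.conj_inv)
  also have "\<dots> = a (p g) (phi (G.iv s))" using a s by (intro phi_equiv) auto
  finally have e1: "phi (G.iv (G.m (G.m g s) (G.iv g))) = a (p g) (phi (G.iv s))" .
  have e2: "a (p (G.m g s)) (a (p (G.iv g)) (T.iv t)) = T.iv t"
    unfolding pc using a by simp
  let ?X = "a (p g) (phi (G.iv s))"
  have X: "?X \<in> T.arr" "T.rg ?X = G.rg g" using a s by auto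
  have "T.m (T.m t ?X) (T.iv t) = T.m (T.m ?X t) (T.iv t)" using a X T_comm by simp
  also have "\<dots> = T.m ?X (T.m t (T.iv t))" using a X by (intro T.assoc) auto
  also have "\<dots> = ?X" using a X by simp
  finally have e3: "T.m (T.m t ?X) (T.iv t) = ?X" .
  show ?thesis using e1 e2 e3 s by (simp add: emb_simp)
qed

lemma emb_closed_normal: "closed_normal_subgroupoid TG (emb ` S)"
  unfolding closed_normal_subgroupoid_def
proof (intro conjI ballI impI)
  show "emb ` S \<subseteq> garr TG" using emb_TGs by (simp add: image_subset_iff)
  show "closedin (gr_arr TG) (emb ` S)" by (rule emb_closed)
  show "gr_rng TG n = gr_src TG n" if "n \<in> emb ` S" for n
    using that S_iso by (auto simp: emb_simp)
  show "gr_unit TG x \<in> emb ` S" if "x \<in> gobj TG" for x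
    using that by (auto simp: emb_simp image_iff intro!: bexI[of _ "G.un x"])
  show "gr_mul TG n m \<in> emb ` S"
    if nm: "n \<in> emb ` S" "m \<in> emb ` S" and c: "gr_src TG n = gr_rng TG m" for n m
  proof -
    obtain s s' where ss: "s \<in> S" "s' \<in> S" "n = emb s" "m = emb s'" using nm by blast
    have c: "G.sr s = G.rg s'" using c by (simp add: ss(3,4) emb_simp)
    have "gr_mul TG n m = emb (G.m s s')" using emb_mul[OF ss(1,2) c] ss(3,4) by simp
    then show ?thesis using S_mul[OF ss(1,2) c] by blast
  qed
  show "gr_inv TG n \<in> emb ` S" if "n \<in> emb ` S" for n
    using that emb_inv S_inv by auto
  show "gr_mul TG (gr_mul TG x n) (gr_inv TG x) \<in> emb ` S"
    if x: "x \<in> garr TG" and n: "n \<in> emb ` S" and c: "gr_src TG x = gr_rng TG n" for x n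
  proof -
    obtain s t g where s: "s \<in> S" "n = emb s" "x = (t, g)" using n by (cases x) auto
    have "G.sr g = G.rg s" using c s by (simp add: emb_simp)
    then show ?thesis using emb_conj[of t g s] S_conj[of g s] x s S_arr by auto
  qed
qed

lemma R_iff: "((t,g),(t',g')) \<in> R \<longleftrightarrow> (t,g) \<in> TGs \<and> (\<exists>s\<in>S. G.sr s = G.rg g \<and> t' = T.m t (phi (G.iv s)) \<and> g' = G.m s g)"
  unfolding TG_rel_def by blast

lemma TG_rel_subset: "R \<subseteq> TGs \<times> TGs"
proof
  fix z assume "z \<in> R"
  then obtain t g t' g' where z: "z = ((t,g),(t',g'))" "((t,g),(t',g')) \<in> R" by (cases z) auto
  then obtain s where s: "(t,g) \<in> TGs" "s \<in> S" "G.sr s = G.rg g" "t' = T.m t (phi (G.iv s))" "g' = G.m s g"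
    unfolding R_iff by blast
  then show "z \<in> TGs \<times> TGs" using z S_arr S_iso S_inv by simp
qed

lemma TG_rel_refl_on: "refl_on TGs R"
  unfolding refl_on_def
proof (intro conjI ballI)
  fix x assume x: "x \<in> TGs"
  then obtain t g where e: "x = (t,g)" by (cases x) auto
  have a: "t \<in> T.arr" "g \<in> G.arr" "T.rg t = G.rg g" using x e by auto
  show "(x, x) \<in> R" unfolding e R_iff using a x e
    by (intro conjI bexI[of _ "G.un (G.rg g)"]) auto
qed

lemma TG_rel_sym: "sym R"
  unfolding sym_def
proof (intro allI impI)
  fix x y assume "(x,y) \<in> R"
  then obtain t g t' g' where z: "x = (t,g)" "y = (t',g')" "((t,g),(t',g')) \<in> R" by (cases x, cases y) auto
  then obtain s where s: "(t,g) \<in> TGs" "s \<in> S" "G.sr s = G.rg g" "t' = T.m t (phi (G.iv s))" "g' = G.m s g"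
    unfolding R_iff by blast
  have a: "s \<in> G.arr" "G.sr s = G.rg s" "G.iv s \<in> S" "t \<in> T.arr" "g \<in> G.arr" "T.rg t = G.rg g"
    using s S_arr S_iso S_inv by auto
  have e1: "T.m t' (phi (G.iv (G.iv s))) = t"
  proof -
    have "T.m t' (phi (G.iv (G.iv s))) = T.m (T.m t (phi (G.iv s))) (phi s)" unfolding s(4) using a by simp
    also have "\<dots> = T.m t (T.m (phi (G.iv s)) (phi s))" using s a by (intro T.assoc) auto
    also have "\<dots> = t" using s a by simp
    finally show ?thesis .
  qed
  have e2: "G.m (G.iv s) g' = g"
  proof -
    have "G.m (G.iv s) g' = G.m (G.m (G.iv s) s) g" unfolding s(5) using s(3) a by (intro G.assoc[symmetric]) auto
    also have "\<dots> = g" using a s by simp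
    finally show ?thesis .
  qed
  show "(y, x) \<in> R" unfolding z R_iff using a s e1 e2
    by (intro conjI bexI[of _ "G.iv s"]) auto
qed

lemma TG_rel_trans: "trans R"
  unfolding trans_def
proof (intro allI impI)
  fix x y z assume "(x,y) \<in> R" "(y,z) \<in> R"
  then obtain t g t' g' t'' g'' where e: "x = (t,g)" "y = (t',g')" "z = (t'',g'')"
    "((t,g),(t',g')) \<in> R" "((t',g'),(t'',g'')) \<in> R" by (cases x, cases y, cases z) auto
  then obtain s s' where s: "(t,g) \<in> TGs" "s \<in> S" "G.sr s = G.rg g" "t' = T.m t (phi (G.iv s))" "g' = G.m s g"
    "s' \<in> S" "G.sr s' = G.rg g'" "t'' = T.m t' (phi (G.iv s'))" "g'' = G.m s' g'"
    unfolding R_iff by blast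
  have a0: "s \<in> G.arr" "s' \<in> G.arr" "t \<in> T.arr" "g \<in> G.arr" "G.iv s \<in> S" "G.iv s' \<in> S"
    using s S_arr S_inv by auto
  have x1: "G.sr s = G.rg g" by (rule s(3))
  have x2: "G.rg s = G.rg g" using S_iso[OF s(2)] x1 by simp
  have x3: "G.sr s' = G.rg g" using s(7) unfolding s(5) G.rg_mul[OF a0(1) a0(4) x1] x2 .
  have x4: "G.rg s' = G.rg g" using S_iso[OF s(6)] x3 by simp
  have x5: "T.rg t = G.rg g" using s(1) by simp
  note a = a0 x1 x2 x3 x4 x5
  have ss: "G.m s' s \<in> S" using S_mul[OF s(6) s(2)] x3 x2 by simp
  have e1: "t'' = T.m t (phi (G.iv (G.m s' s)))"
  proof -
    have "phi (G.iv (G.m s' s)) = phi (G.m (G.iv s) (G.iv s'))" using a by (simp add: G.inv_mul)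
    also have "\<dots> = T.m (phi (G.iv s)) (phi (G.iv s'))" using a by (intro phi_mul) auto
    finally have "phi (G.iv (G.m s' s)) = T.m (phi (G.iv s)) (phi (G.iv s'))" .
    moreover have "T.m (T.m t (phi (G.iv s))) (phi (G.iv s')) = T.m t (T.m (phi (G.iv s)) (phi (G.iv s')))"
      using a by (intro T.assoc) auto
    ultimately show ?thesis unfolding s(8) s(4) by simp
  qed
  have e2: "g'' = G.m (G.m s' s) g" unfolding s(9) s(5) using a by (intro G.assoc[symmetric]) auto
  show "(x, z) \<in> R" unfolding e R_iff using a s e1 e2 ss
    by (intro conjI bexI[of _ "G.m s' s"]) auto
qed

lemma TG_rel_equiv: "equiv TGs R"
  by (rule equivI[OF TG_rel_subset TG_rel_refl_on TG_rel_sym TG_rel_trans])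

section \<open>The pushout groupoid\<close>

sublocale TGq: equiv_quotient XTG R
  by unfold_locales (simp add: TG_rel_equiv)

abbreviation "PG \<equiv> pushout_groupoid G H p T a phi"
abbreviation "Q \<equiv> quotient_topology XTG R"
abbreviation "q \<equiv> cls R"
abbreviation "proj \<equiv> pushout_proj p"
abbreviation "incl \<equiv> pushout_incl G H p T phi"
abbreviation "psi \<equiv> phi_star G H p T phi"

lemma PG_simps:
  "gr_arr PG = Q" "gr_obj PG = OG"
  "gr_rng PG = (\<lambda>A. G.rg (snd (rep A)))"
  "gr_src PG = (\<lambda>A. G.sr (snd (rep A)))"
  "gr_unit PG = (\<lambda>x. q (T.un x, G.un x))"
  "gr_mul PG = (\<lambda>A B. q (gr_mul TG (rep A) (rep B)))"
  "gr_inv PG = (\<lambda>A. q (gr_inv TG (rep A)))"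
  by (simp_all add: pushout_groupoid_def Let_def)

lemma PG_arr_obj_unit[simp]: "gr_arr PG = Q" "gr_obj PG = OG" "gr_unit PG x = q (T.un x, G.un x)"
  by (simp_all add: PG_simps)

lemma garr_PG: "garr PG = TGs // R"
proof -
  have "garr PG = topspace Q" unfolding garr_def by simp
  then show ?thesis using TGq.topspace_Q by simp
qed
lemma gobj_PG[simp]: "gobj PG = G.obj" unfolding gobj_def by simp

lemma R_rg_eq: "(x, y) \<in> R \<Longrightarrow> G.rg (snd x) = G.rg (snd y)"
  and R_sr_eq: "(x, y) \<in> R \<Longrightarrow> G.sr (snd x) = G.sr (snd y)"
  and R_p_eq: "(x, y) \<in> R \<Longrightarrow> p (snd x) = p (snd y)"
proof -
  assume xy: "(x, y) \<in> R"
  obtain t g t' g' where e: "x = (t,g)" "y = (t',g')" by (cases x, cases y) auto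
  then obtain s where s: "(t,g) \<in> TGs" "s \<in> S" "G.sr s = G.rg g" "t' = T.m t (phi (G.iv s))" "g' = G.m s g"
    using xy R_iff by blast
  have g: "g \<in> G.arr" "s \<in> G.arr" using s S_arr by auto
  show "G.rg (snd x) = G.rg (snd y)" unfolding e using S_iso[OF s(2)] s(3) g by (simp add: s(5))
  show "G.sr (snd x) = G.sr (snd y)" unfolding e using s(3) g by (simp add: s(5))
  show "p (snd x) = p (snd y)" unfolding e using s(3) g S_p[OF s(2)] S_iso[OF s(2)] by (simp add: s(5))
qed

lemma rep_q_R: "x \<in> TGs \<Longrightarrow> (x, rep (q x)) \<in> R"
  using TGq.rep_R by simp

lemma rng_q[simp]: "x \<in> TGs \<Longrightarrow> gr_rng PG (q x) = G.rg (snd x)"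
  using R_rg_eq[OF rep_q_R] by (simp add: PG_simps)
lemma src_q[simp]: "x \<in> TGs \<Longrightarrow> gr_src PG (q x) = G.sr (snd x)"
  using R_sr_eq[OF rep_q_R] by (simp add: PG_simps)
lemma proj_q[simp]: "x \<in> TGs \<Longrightarrow> proj (q x) = p (snd x)"
  using R_p_eq[OF rep_q_R] by (simp add: pushout_proj_def)

lemma q_in: "x \<in> TGs \<Longrightarrow> q x \<in> garr PG"
  using TGq.q_in by (simp add: garr_PG)

lemma q_eq_iff: "x \<in> TGs \<Longrightarrow> y \<in> TGs \<Longrightarrow> q x = q y \<longleftrightarrow> (x, y) \<in> R"
  using TGq.q_eq by simp

lemma PG_cases: "A \<in> garr PG \<Longrightarrow> (\<And>t g. (t, g) \<in> TGs \<Longrightarrow> A = q (t, g) \<Longrightarrow> P) \<Longrightarrow> P"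
  using TGq.quot_cases unfolding garr_PG by (metis surj_pair topspace_XTG)

lemma R_mul:
  assumes x: "((t,g),(t',g')) \<in> R" and y: "((u,h),(u',h')) \<in> R" and c: "G.sr g = G.rg h"
  shows "((T.m t (a (p g) u), G.m g h), (T.m t' (a (p g') u'), G.m g' h')) \<in> R"
proof -
  obtain s where s: "(t,g) \<in> TGs" "s \<in> S" "G.sr s = G.rg g" "t' = T.m t (phi (G.iv s))" "g' = G.m s g"
    using x R_iff by blast
  obtain r where r: "(u,h) \<in> TGs" "r \<in> S" "G.sr r = G.rg h" "u' = T.m u (phi (G.iv r))" "h' = G.m r h"
    using y R_iff by blast
  have b: "t \<in> T.arr" "g \<in> G.arr" "u \<in> T.arr" "h \<in> G.arr" "s \<in> G.arr" "r \<in> G.arr"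
    "G.iv s \<in> S" "G.iv r \<in> S" using s r S_arr S_inv by auto
  have e1: "T.rg t = G.rg g" "G.rg s = G.rg g" "T.rg u = G.sr g" "G.rg r = G.sr g" "G.sr r = G.sr g"
    using s r c S_iso[OF s(2)] S_iso[OF r(2)] by auto
  have ch: "G.rg h = G.sr g" using c by simp
  note e = e1 s(3) ch
  define k where "k = G.m (G.m g r) (G.iv g)"
  have kS: "k \<in> S" unfolding k_def using S_conj[OF b(2) r(2)] e by simp
  have k: "k \<in> G.arr" "G.rg k = G.rg g" "G.sr k = G.rg g" using kS S_arr S_iso unfolding k_def using b e by auto
  define sig where "sig = G.m s k"
  have sigS: "sig \<in> S" unfolding sig_def using S_mul[OF s(2) kS] e k by simp
  have sg: "sig \<in> G.arr" "G.sr sig = G.rg g" using sigS S_arr S_iso unfolding sig_def using b e k by auto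
  have pk: "phi (G.iv k) = a (p g) (phi (G.iv r))"
  proof -
    have "G.iv k = G.m (G.m g (G.iv r)) (G.iv g)" unfolding k_def using b e by (intro G.conj_inv) auto
    then show ?thesis using phi_equiv[OF b(2) b(8)] b e by simp
  qed
  have psig: "phi (G.iv sig) = T.m (a (p g) (phi (G.iv r))) (phi (G.iv s))"
  proof -
    have "phi (G.iv sig) = phi (G.m (G.iv k) (G.iv s))" unfolding sig_def using b e k by (simp add: G.inv_mul)
    also have "\<dots> = T.m (phi (G.iv k)) (phi (G.iv s))"
      using b e k kS S_inv by (intro phi_mul) auto
    finally show ?thesis using pk by simp
  qed
  have g2: "G.m g' h' = G.m sig (G.m g h)"
    unfolding s(5) r(5) sig_def k_def using b e by (intro G.mul_conj_shift) auto
  have pg': "p g' = p g" using s(5) b e S_p[OF s(2)] by simp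
  let ?A = "a (p g) u" and ?B = "a (p g) (phi (G.iv r))" and ?C = "phi (G.iv s)"
  have abc: "?A \<in> T.arr" "?B \<in> T.arr" "?C \<in> T.arr" "T.rg ?A = G.rg g" "T.rg ?B = G.rg g" "T.rg ?C = G.rg g"
    using b e by auto
  have t2: "T.m t' (a (p g') u') = T.m (T.m t (a (p g) u)) (phi (G.iv sig))"
  proof -
    have "a (p g') u' = T.m ?A ?B" unfolding pg' r(4) using b e by (intro a_mul) auto
    then have "T.m t' (a (p g') u') = T.m (T.m t ?C) (T.m ?A ?B)" using s(4) by simp
    also have "\<dots> = T.m (T.m t ?A) (T.m ?B ?C)" using abc b e by (intro T_mul_rearrange) auto
    finally show ?thesis using psig by simp
  qed
  have mem: "(T.m t (a (p g) u), G.m g h) \<in> TGs" using b e by simp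
  show ?thesis unfolding R_iff using mem sigS sg b c t2 g2
    by (intro conjI bexI[of _ sig]) auto
qed

lemma R_inv:
  assumes x: "((t,g),(t',g')) \<in> R"
  shows "((a (p (G.iv g)) (T.iv t), G.iv g), (a (p (G.iv g')) (T.iv t'), G.iv g')) \<in> R"
proof -
  obtain s where s: "(t,g) \<in> TGs" "s \<in> S" "G.sr s = G.rg g" "t' = T.m t (phi (G.iv s))" "g' = G.m s g"
    using x R_iff by blast
  have b: "t \<in> T.arr" "g \<in> G.arr" "s \<in> G.arr" "G.iv s \<in> S" using s S_arr S_inv by auto
  have e: "T.rg t = G.rg g" "G.rg s = G.rg g" "G.sr s = G.rg g" using s S_iso[OF s(2)] by auto
  define sig where "sig = G.m (G.m (G.iv g) (G.iv s)) (G.iv (G.iv g))"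
  have sigS: "sig \<in> S" unfolding sig_def using S_conj[of "G.iv g" "G.iv s"] b e by simp
  have sg: "sig \<in> G.arr" "G.sr sig = G.sr g" unfolding sig_def using b e by auto
  have isig: "G.iv sig = G.m (G.m (G.iv g) s) g"
    unfolding sig_def using G.conj_inv[of "G.iv g" "G.iv s"] b e by simp
  have psig: "phi (G.iv sig) = a (p (G.iv g)) (phi s)"
    using phi_equiv[of "G.iv g" s] isig b e s(2) by simp
  have g2: "G.iv g' = G.m sig (G.iv g)"
  proof -
    have "G.m sig (G.iv g) = G.m (G.m (G.iv g) (G.iv s)) (G.m g (G.iv g))"
      unfolding sig_def using b e by (simp add: G.assoc)
    also have "\<dots> = G.m (G.iv g) (G.iv s)" using b e by simp
    also have "\<dots> = G.iv g'" using b e by (simp add: s(5) G.inv_mul)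
    finally show ?thesis by simp
  qed
  have pg: "p (G.iv g') = p (G.iv g)" using b e S_p[OF s(2)] by (simp add: s(5))
  have it: "T.iv t' = T.m (T.iv t) (phi s)"
  proof -
    have "T.iv t' = T.m (T.iv (phi (G.iv s))) (T.iv t)" using b e by (simp add: s(4) T.inv_mul)
    also have "\<dots> = T.m (phi s) (T.iv t)" using b s(2) by simp
    also have "\<dots> = T.m (T.iv t) (phi s)" using b e s(2) by (intro T_comm) auto
    finally show ?thesis .
  qed
  have t2: "a (p (G.iv g')) (T.iv t') = T.m (a (p (G.iv g)) (T.iv t)) (phi (G.iv sig))"
    unfolding pg it psig using b e s(2) by (intro a_mul) auto
  have mem: "(a (p (G.iv g)) (T.iv t), G.iv g) \<in> TGs" using b e by simp
  show ?thesis unfolding R_iff using mem sigS sg t2 g2 b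
    by (intro conjI bexI[of _ sig]) auto
qed

lemma rep_pair: "x \<in> TGs \<Longrightarrow> \<exists>t' g'. rep (q x) = (t', g') \<and> (x, (t', g')) \<in> R"
  using rep_q_R by (metis surj_pair)

lemma mul_q:
  assumes x: "(t,g) \<in> TGs" and y: "(u,h) \<in> TGs" and c: "G.sr g = G.rg h"
  shows "gr_mul PG (q (t,g)) (q (u,h)) = q (gr_mul TG (t,g) (u,h))"
proof -
  obtain t' g' where r1: "rep (q (t,g)) = (t', g')" "((t,g), (t', g')) \<in> R" using rep_pair[OF x] by blast
  obtain u' h' where r2: "rep (q (u,h)) = (u', h')" "((u,h), (u', h')) \<in> R" using rep_pair[OF y] by blast
  have "(gr_mul TG (t,g) (u,h), gr_mul TG (t',g') (u',h')) \<in> R"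
    using R_mul[OF r1(2) r2(2) c] by simp
  then have "q (gr_mul TG (t',g') (u',h')) = q (gr_mul TG (t,g) (u,h))"
    using TGq.q_eqI TGq.R_sym by metis
  then show ?thesis using r1 r2 by (simp add: PG_simps)
qed

lemma inv_q:
  assumes x: "(t,g) \<in> TGs"
  shows "gr_inv PG (q (t,g)) = q (gr_inv TG (t,g))"
proof -
  obtain t' g' where r1: "rep (q (t,g)) = (t', g')" "((t,g), (t', g')) \<in> R" using rep_pair[OF x] by blast
  have "(gr_inv TG (t,g), gr_inv TG (t',g')) \<in> R"
    using R_inv[OF r1(2)] by simp
  then have "q (gr_inv TG (t',g')) = q (gr_inv TG (t,g))"
    using TGq.q_eqI TGq.R_sym by metis
  then show ?thesis using r1 by (simp add: PG_simps)
qed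

lemma is_groupoid_PG: "is_groupoid PG"
proof (rule is_groupoid_image[OF is_groupoid_TG, of q])
  show "q ` garr TG = garr PG"
    unfolding garr_TG garr_PG by (metis TGq.q_surj TGq.topspace_Q topspace_XTG)
  show "gobj PG = gobj TG" by simp
  fix x y assume x: "x \<in> garr TG"
  obtain t g where xe: "x = (t, g)" by (cases x)
  show "gr_rng PG (q x) = gr_rng TG x" "gr_src PG (q x) = gr_src TG x"
    using x by (simp_all add: xe)
  show "gr_inv PG (q x) = q (gr_inv TG x)" using x inv_q by (simp add: xe)
  assume y: "y \<in> garr TG" and c: "gr_src TG x = gr_rng TG y"
  obtain u h where ye: "y = (u, h)" by (cases y)
  show "gr_mul PG (q x) (q y) = q (gr_mul TG x y)"
    using x y c mul_q[of t g u h] by (simp add: xe ye)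
next
  show "gr_unit PG u = q (gr_unit TG u)" for u by simp
qed

lemma continuous_map_in_G: "continuous_map Z XG f \<Longrightarrow> z \<in> topspace Z \<Longrightarrow> f z \<in> G.arr"
  using continuous_map_in by fastforce
lemma cont_S_diff:
  assumes f1: "continuous_map Z XG f1" and f2: "continuous_map Z XG f2"
    and c: "\<And>z. z \<in> topspace Z \<Longrightarrow> G.sr (f1 z) = G.sr (f2 z) \<and> p (f1 z) = p (f2 z)"
  shows "continuous_map Z XT (\<lambda>z. phi (G.m (f1 z) (G.iv (f2 z))))"
proof -
  have "continuous_map Z XG (\<lambda>z. G.m (f1 z) (G.iv (f2 z)))"
    by (intro cont_mulG f1 cont_invG f2) (use c continuous_map_in_G[OF f2] in simp)
  moreover have "\<And>z. z \<in> topspace Z \<Longrightarrow> G.m (f1 z) (G.iv (f2 z)) \<in> S"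
    using c continuous_map_in_G[OF f1] continuous_map_in_G[OF f2] S_diff by blast
  ultimately have "continuous_map Z (subtopology XG S) (\<lambda>z. G.m (f1 z) (G.iv (f2 z)))"
    by (simp add: continuous_map_in_subtopology image_subset_iff)
  then show ?thesis by (rule continuous_map_comp[OF _ phi_cont])
qed

lemma R_Image_open:
  assumes V: "openin XTG V"
  shows "openin XTG (R `` V)"
proof -
  define \<sigma> where "\<sigma> = (\<lambda>(y, g). T.m (fst y) (phi (G.m (snd y) (G.iv g))))"
  let ?D = "{(y, g). y \<in> topspace XTG \<and> g \<in> G.arr \<and> p (snd y) = p g}"
  let ?Z = "subtopology (prod_topology XTG XG) ?D"
  have D: "fst z \<in> TGs" "snd z \<in> G.arr" "G.sr (snd (fst z)) = G.sr (snd z)"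
    "p (snd (fst z)) = p (snd z)" if "z \<in> topspace ?Z" for z
    using that p_sr[of "snd z"] p_sr[of "snd (fst z)"] by (auto simp del: mem_TGs, auto)
  have "continuous_map ?Z XT (\<lambda>z. T.m (fst (fst z)) (phi (G.m (snd (fst z)) (G.iv (snd z)))))"
  proof (rule cont_mulT)
    show "continuous_map ?Z XT (\<lambda>z. fst (fst z))" by (rule continuous_map_comp[OF continuous_map_fst_sub cont_fstTG])
    show "continuous_map ?Z XT (\<lambda>z. phi (G.m (snd (fst z)) (G.iv (snd z))))"
      by (rule cont_S_diff[OF continuous_map_comp[OF continuous_map_fst_sub cont_sndTG] continuous_map_snd_sub]) (use D in auto)
    fix z assume z: "z \<in> topspace ?Z"
    obtain u h where uh: "fst z = (u, h)" by (cases "fst z")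
    have "h \<in> G.arr" "T.rg u = G.rg h" using D(1)[OF z] uh by auto
    moreover have "G.m h (G.iv (snd z)) \<in> S" using S_diff D[OF z] uh calculation by simp
    ultimately show "T.rg (fst (fst z)) = T.rg (phi (G.m (snd (fst z)) (G.iv (snd z))))"
      using uh D[OF z] by simp
  qed
  then have "continuous_map ?Z XT \<sigma>" by (simp add: \<sigma>_def case_prod_unfold)
  moreover have "(\<sigma> (y, g), g) \<in> TGs \<and> ((\<sigma> (y, g), g), y) \<in> R"
    if "y \<in> topspace XTG" "g \<in> G.arr" "p (snd y) = p g" for y g
  proof -
    obtain u h where y: "y = (u, h)" by (cases y)
    have uh: "u \<in> T.arr" "h \<in> G.arr" "T.rg u = G.rg h" using that y by auto
    have sr: "G.sr h = G.sr g" and rg: "G.rg h = G.rg g"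
      using that uh p_sr[of g] p_sr[of h] p_rg[of g] p_rg[of h] y by simp_all
    define s where "s = G.m h (G.iv g)"
    have sS: "s \<in> S" unfolding s_def using S_diff uh that y sr by simp
    have sa: "G.sr s = G.rg g" "G.rg s = G.rg h" unfolding s_def using uh that sr by auto
    have "T.m (T.m u (phi s)) (phi (G.iv s)) = T.m u (T.m (phi s) (phi (G.iv s)))"
      using uh sS sa S_inv by (intro T.assoc) auto
    also have "\<dots> = u" using uh sS sa by simp
    finally have "T.m (T.m u (phi s)) (phi (G.iv s)) = u" .
    moreover have "G.m s g = h" unfolding s_def using uh that sr G.assoc[of h "G.iv g" g] by simp
    ultimately show ?thesis unfolding y R_iff \<sigma>_def using uh that sS sa rg
      by (auto simp: s_def[symmetric] intro!: bexI[of _ s])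
  qed
  moreover have "y \<in> topspace XTG \<and> p (snd y) = p g \<and> \<sigma> (y, g) = t"
    if tg: "(t, g) \<in> TGs" and r: "((t, g), y) \<in> R" for t g y
  proof -
    obtain s where s: "s \<in> S" "G.sr s = G.rg g" "y = (T.m t (phi (G.iv s)), G.m s g)"
      using r R_iff by (cases y) auto
    have b: "t \<in> T.arr" "g \<in> G.arr" "s \<in> G.arr" "T.rg t = G.rg g" "G.rg s = G.rg g"
      using tg s S_arr S_iso[of s] by auto
    have hg: "G.m (G.m s g) (G.iv g) = s" using b s(2) G.assoc[of s g "G.iv g"] by simp
    have "T.m (T.m t (phi (G.iv s))) (phi s) = T.m t (T.m (phi (G.iv s)) (phi s))"
      using b s S_inv by (intro T.assoc) auto
    also have "\<dots> = t" using b s by simp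
    finally have "\<sigma> (y, g) = t" unfolding \<sigma>_def s(3) using hg by simp
    moreover have "y \<in> topspace XTG" using TGq.R_sub[OF r] by simp
    ultimately show ?thesis using b s S_p by simp
  qed
  ultimately show ?thesis by (intro openin_Image_by_sections[OF V continuous_map_comp[OF cont_sndTG cont_p]])
qed

lemma R_char: "((t,g),(t',g')) \<in> R \<longleftrightarrow> (t,g) \<in> TGs \<and> (t',g') \<in> TGs \<and> G.sr g = G.sr g' \<and> p g = p g' \<and>
    t' = T.m t (phi (G.m g (G.iv g')))"
proof
  assume r: "((t,g),(t',g')) \<in> R"
  obtain s where s: "(t,g) \<in> TGs" "s \<in> S" "G.sr s = G.rg g" "t' = T.m t (phi (G.iv s))" "g' = G.m s g"
    using r R_iff by blast
  have b: "g \<in> G.arr" "s \<in> G.arr" using s S_arr by auto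
  have "G.m g (G.iv g') = G.m g (G.m (G.iv g) (G.iv s))" using b s(3) by (simp add: s(5) G.inv_mul)
  also have "\<dots> = G.m (G.m g (G.iv g)) (G.iv s)" using b s(3) by (intro G.assoc[symmetric]) auto
  also have "\<dots> = G.iv s" using b s(3) S_iso[OF s(2)] by simp
  finally have e: "G.m g (G.iv g') = G.iv s" .
  show "(t,g) \<in> TGs \<and> (t',g') \<in> TGs \<and> G.sr g = G.sr g' \<and> p g = p g' \<and> t' = T.m t (phi (G.m g (G.iv g')))"
    using TGq.R_sub[OF r] e s b S_p[OF s(2)] S_iso[OF s(2)] by simp
next
  assume h: "(t,g) \<in> TGs \<and> (t',g') \<in> TGs \<and> G.sr g = G.sr g' \<and> p g = p g' \<and> t' = T.m t (phi (G.m g (G.iv g')))"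
  have b: "g \<in> G.arr" "g' \<in> G.arr" "t \<in> T.arr" using h by auto
  define s where "s = G.m g' (G.iv g)"
  have sS: "s \<in> S" unfolding s_def using S_diff[of g' g] h by simp
  have rg: "G.rg g' = G.rg g" using p_rg[OF b(1)] p_rg[OF b(2)] h by simp
  have sa: "G.sr s = G.rg g" unfolding s_def using b h by simp
  have ivs: "G.iv s = G.m g (G.iv g')" unfolding s_def using b h by (simp add: G.inv_mul)
  have gs: "G.m s g = g'" unfolding s_def using b h G.assoc[of g' "G.iv g" g] by simp
  show "((t,g),(t',g')) \<in> R" unfolding R_iff using h sS sa ivs gs by (intro conjI bexI[of _ s]) auto
qed

lemma R_closed: "closedin (prod_topology XTG XTG) R"
proof -
  let ?Y = "prod_topology XTG XTG"
  have cg1: "continuous_map ?Y XG (\<lambda>z. snd (fst z))" by (rule continuous_map_comp[OF continuous_map_fst cont_sndTG])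
  have cg2: "continuous_map ?Y XG (\<lambda>z. snd (snd z))" by (rule continuous_map_comp[OF continuous_map_snd cont_sndTG])
  define C where "C = {z \<in> topspace ?Y. p (snd (fst z)) = p (snd (snd z))}"
  have C: "closedin ?Y C" unfolding C_def
    by (rule closedin_continuous_maps_eq[OF lc_arr_Hausdorff[OF H_lc] continuous_map_comp[OF cg1 cont_p] continuous_map_comp[OF cg2 cont_p]])
  have tC: "topspace (subtopology ?Y C) = C" using closedin_subset[OF C] by auto
  have Cm: "fst z \<in> TGs" "snd z \<in> TGs" "G.sr (snd (fst z)) = G.sr (snd (snd z))"
    "p (snd (fst z)) = p (snd (snd z))" if "z \<in> C" for z
    using that p_sr[of "snd (fst z)"] p_sr[of "snd (snd z)"] unfolding C_def
    by (auto simp del: mem_TGs) (auto simp: mem_Times_iff)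
  define F :: "('t \<times> 'g) \<times> 't \<times> 'g \<Rightarrow> 't"
    where "F = (\<lambda>z. T.m (fst (fst z)) (phi (G.m (snd (fst z)) (G.iv (snd (snd z))))))"
  have cF: "continuous_map (subtopology ?Y C) XT F"
    unfolding F_def
  proof (rule cont_mulT)
    show "continuous_map (subtopology ?Y C) XT (\<lambda>z. fst (fst z))"
      by (rule continuous_map_from_subtopology[OF continuous_map_comp[OF continuous_map_fst cont_fstTG]])
    show "continuous_map (subtopology ?Y C) XT (\<lambda>z. phi (G.m (snd (fst z)) (G.iv (snd (snd z)))))"
      by (rule cont_S_diff[OF continuous_map_from_subtopology[OF cg1] continuous_map_from_subtopology[OF cg2]])
         (use Cm tC in auto)
    fix z assume "z \<in> topspace (subtopology ?Y C)"
    then have z: "z \<in> C" using tC by simp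
    obtain t g t' g' where e: "z = ((t,g),(t',g'))" by (metis surj_pair)
    have "G.m g (G.iv g') \<in> S" using S_diff[of g g'] Cm[OF z] e by simp
    then show "T.rg (fst (fst z)) = T.rg (phi (G.m (snd (fst z)) (G.iv (snd (snd z)))))"
      using Cm[OF z] e by simp
  qed
  have "closedin (subtopology ?Y C) {z \<in> topspace (subtopology ?Y C). fst (snd z) = F z}"
    by (rule closedin_continuous_maps_eq[OF lc_arr_Hausdorff[OF T_lc]
          continuous_map_from_subtopology[OF continuous_map_comp[OF continuous_map_snd cont_fstTG]] cF])
  moreover have "{z \<in> topspace (subtopology ?Y C). fst (snd z) = F z} = R"
  proof (intro set_eqI)
    fix z :: "('t \<times> 'g) \<times> 't \<times> 'g"
    obtain t g t' g' where e: "z = ((t,g),(t',g'))" by (metis surj_pair)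
    have "z \<in> C \<longleftrightarrow> (t,g) \<in> TGs \<and> (t',g') \<in> TGs \<and> p g = p g'"
      unfolding C_def e by (simp del: mem_TGs)
    then show "z \<in> {z \<in> topspace (subtopology ?Y C). fst (snd z) = F z} \<longleftrightarrow> z \<in> R"
      unfolding tC e R_char F_def using Cm[of z] e by auto
  qed
  ultimately have "closedin (subtopology ?Y C) R" by simp
  then show ?thesis by (rule closedin_trans_full[OF _ C])
qed

lemma q_open: "open_map XTG Q q"
  by (rule TGq.q_open) (rule R_Image_open)

lemma q_cont: "continuous_map XTG Q q" by (rule TGq.q_cont)
lemma q_surj: "q ` TGs = topspace Q" using TGq.q_surj by simp
lemma q_quot: "quotient_map XTG Q q"
  by (rule continuous_open_imp_quotient_map[OF q_cont q_open]) (use TGq.q_surj in simp)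

lemma Q_lc: "locally_compact_space Q"
  by (rule locally_compact_space_continuous_open_map_image[OF q_cont q_open _ XTG_lc]) (use TGq.q_surj in simp)

lemma Q_haus: "Hausdorff_space Q"
  by (rule TGq.Hausdorff_space_quotient[OF q_open R_closed])

lemma comp_PG: "(A, B) \<in> composable PG \<longleftrightarrow> A \<in> garr PG \<and> B \<in> garr PG \<and> gr_src PG A = gr_rng PG B"
  by (simp add: composable_def)

lemma comp_TG': "(x, y) \<in> composable TG \<longleftrightarrow> x \<in> TGs \<and> y \<in> TGs \<and> G.sr (snd x) = G.rg (snd y)"
  by (cases x, cases y) (simp add: composable_def del: mem_TGs)

lemma comp_q: "x \<in> TGs \<Longrightarrow> y \<in> TGs \<Longrightarrow> (q x, q y) \<in> composable PG \<longleftrightarrow> (x, y) \<in> composable TG"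
  unfolding comp_PG comp_TG' using q_in by simp

lemma mul_q': "(x, y) \<in> composable TG \<Longrightarrow> gr_mul PG (q x) (q y) = q (gr_mul TG x y)"
  using mul_q unfolding comp_TG' by (cases x, cases y) simp

lemma inv_q': "x \<in> TGs \<Longrightarrow> gr_inv PG (q x) = q (gr_inv TG x)"
  using inv_q by (cases x) simp

lemma qq_quot: "quotient_map (subtopology (prod_topology XTG XTG) (composable TG))
     (subtopology (prod_topology Q Q) (composable PG)) (\<lambda>(x,y). (q x, q y))"
proof (rule continuous_open_imp_quotient_map)
  have ts: "topspace (subtopology (prod_topology XTG XTG) (composable TG)) = composable TG"
    using composable_subset[of TG] by auto
  have tsP: "topspace (subtopology (prod_topology Q Q) (composable PG)) = composable PG"
    using composable_subset[of PG] by (auto simp: garr_def)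
  show "continuous_map (subtopology (prod_topology XTG XTG) (composable TG))
     (subtopology (prod_topology Q Q) (composable PG)) (\<lambda>(x,y). (q x, q y))"
    unfolding continuous_map_in_subtopology
  proof
    show "continuous_map (subtopology (prod_topology XTG XTG) (composable TG)) (prod_topology Q Q) (\<lambda>(x,y). (q x, q y))"
      by (rule continuous_map_from_subtopology) (use q_cont in \<open>simp add: continuous_map_prod_top\<close>)
    show "(\<lambda>(x,y). (q x, q y)) \<in> topspace (subtopology (prod_topology XTG XTG) (composable TG)) \<rightarrow> composable PG"
      unfolding ts using comp_q comp_TG' by auto
  qed
  have pre: "{z \<in> topspace (prod_topology XTG XTG). (\<lambda>(x,y). (q x, q y)) z \<in> composable PG} = composable TG"
    using comp_q comp_TG' by (auto simp del: mem_TGs)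
  show "open_map (subtopology (prod_topology XTG XTG) (composable TG))
     (subtopology (prod_topology Q Q) (composable PG)) (\<lambda>(x,y). (q x, q y))"
    by (rule open_map_restriction[OF open_map_prod[OF q_open q_open] pre])
  show "(\<lambda>(x,y). (q x, q y)) ` topspace (subtopology (prod_topology XTG XTG) (composable TG)) =
     topspace (subtopology (prod_topology Q Q) (composable PG))"
    unfolding ts tsP
  proof
    show "(\<lambda>(x,y). (q x, q y)) ` composable TG \<subseteq> composable PG" using comp_q comp_TG' by auto
    show "composable PG \<subseteq> (\<lambda>(x,y). (q x, q y)) ` composable TG"
    proof
      fix z assume z: "z \<in> composable PG"
      obtain A B where e: "z = (A,B)" by (cases z)
      have AB: "A \<in> garr PG" "B \<in> garr PG" using z e comp_PG by auto
      obtain t g where x: "(t,g) \<in> TGs" "A = q (t,g)" using AB(1) by (rule PG_cases)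
      obtain u h where y: "(u,h) \<in> TGs" "B = q (u,h)" using AB(2) by (rule PG_cases)
      have "((t,g),(u,h)) \<in> composable TG" using comp_q[OF x(1) y(1)] z e x y by simp
      then show "z \<in> (\<lambda>(x,y). (q x, q y)) ` composable TG" using e x y by force
    qed
  qed
qed

lemma topological_groupoid_PG: "topological_groupoid PG"
  unfolding topological_groupoid_def
proof (intro conjI)
  show "is_groupoid PG" by (rule is_groupoid_PG)
  show "continuous_map (gr_arr PG) (gr_obj PG) (gr_rng PG)"
    unfolding PG_arr_obj_unit
  proof (rule continuous_compose_quotient_map[OF q_quot])
    show "continuous_map XTG OG (gr_rng PG \<circ> q)"
      by (rule continuous_map_eq[OF lc_rng_cont[OF lc_groupoid_TG, unfolded TG_simps(2)]]) (auto simp: case_prod_unfold)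
  qed
  show "continuous_map (gr_arr PG) (gr_obj PG) (gr_src PG)"
    unfolding PG_arr_obj_unit
  proof (rule continuous_compose_quotient_map[OF q_quot])
    show "continuous_map XTG OG (gr_src PG \<circ> q)"
      by (rule continuous_map_eq[OF lc_src_cont[OF lc_groupoid_TG, unfolded TG_simps(2)]]) (auto simp: case_prod_unfold)
  qed
  show "continuous_map (gr_obj PG) (gr_arr PG) (gr_unit PG)"
    using continuous_map_comp[OF lc_unit_cont[OF lc_groupoid_TG, unfolded TG_simps(2)] q_cont] by (simp add: o_def PG_simps(5))
  show "continuous_map (gr_arr PG) (gr_arr PG) (gr_inv PG)"
    unfolding PG_arr_obj_unit
  proof (rule continuous_compose_quotient_map[OF q_quot])
    show "continuous_map XTG Q (gr_inv PG \<circ> q)"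
      by (rule continuous_map_eq[OF continuous_map_comp[OF lc_inv_cont[OF lc_groupoid_TG] q_cont]]) (simp add: inv_q')
  qed
  show "continuous_map (subtopology (prod_topology (gr_arr PG) (gr_arr PG)) (composable PG)) (gr_arr PG)
     (\<lambda>(g, h). gr_mul PG g h)"
    unfolding PG_arr_obj_unit
  proof (rule continuous_compose_quotient_map[OF qq_quot])
    have "continuous_map (subtopology (prod_topology XTG XTG) (composable TG)) Q (\<lambda>z. q (case z of (x,y) \<Rightarrow> gr_mul TG x y))"
      by (rule continuous_map_comp[OF lc_mul_cont[OF lc_groupoid_TG] q_cont])
    then show "continuous_map (subtopology (prod_topology XTG XTG) (composable TG)) Q
        ((\<lambda>(g, h). gr_mul PG g h) \<circ> (\<lambda>(x,y). (q x, q y)))"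
    proof (rule continuous_map_eq)
      fix z assume "z \<in> topspace (subtopology (prod_topology XTG XTG) (composable TG))"
      then have z: "z \<in> composable TG" by simp
      obtain x y where e: "z = (x,y)" by (cases z)
      show "q (case z of (x,y) \<Rightarrow> gr_mul TG x y) = ((\<lambda>(g, h). gr_mul PG g h) \<circ> (\<lambda>(x,y). (q x, q y))) z"
        using mul_q'[of x y] z e by simp
    qed
  qed
qed

lemma lc_groupoid_PG: "lc_groupoid PG"
  unfolding lc_groupoid_def using topological_groupoid_PG Q_lc Q_haus lc_obj_locally_compact[OF G_lc] lc_obj_Hausdorff[OF G_lc] by simp

abbreviation "K \<equiv> ext_kernel PG H proj"
abbreviation "TS \<equiv> {z \<in> TGs. snd z \<in> S}"

lemma incl_def': "incl t = q (t, G.un (T.rg t))" by (simp add: pushout_incl_def)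
lemma psi_def': "psi g = q (T.un (G.rg g), g)" by (simp add: phi_star_def)

lemma snd_open: "open_map XTG XG snd"
  unfolding open_map_def
proof (intro allI impI)
  fix V assume V: "openin XTG V"
  show "openin XG (snd ` V)"
    unfolding openin_subopen[of XG "snd ` V"]
  proof
    fix g0 assume "g0 \<in> snd ` V"
    then obtain t0 where x0: "(t0, g0) \<in> V" by force
    obtain W where W: "openin (prod_topology XT XG) W" "V = W \<inter> TGs"
      using V by (auto simp: openin_subtopology)
    have "\<exists>A B. openin XT A \<and> openin XG B \<and> t0 \<in> A \<and> g0 \<in> B \<and> A \<times> B \<subseteq> W"
      using W x0 by (intro openin_prod_topology_alt[THEN iffD1, rule_format]) auto
    then obtain A B where AB: "openin XT A" "openin XG B" "t0 \<in> A" "g0 \<in> B" "A \<times> B \<subseteq> W" by blast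
    have oA: "openin OG (T.rg ` A)" using Tbun AB(1) units unfolding lc_group_bundle_def open_map_def by auto
    define N where "N = B \<inter> {g \<in> topspace XG. G.rg g \<in> T.rg ` A}"
    have N: "openin XG N" unfolding N_def
      by (intro openin_Int AB(2) openin_continuous_map_preimage[OF lc_rng_cont[OF G_lc] oA])
    have x0T: "(t0, g0) \<in> TGs" using x0 W by blast
    have g0N: "g0 \<in> N" unfolding N_def using AB x0T by force
    have "N \<subseteq> snd ` V"
    proof
      fix g assume "g \<in> N"
      then obtain t where t: "t \<in> A" "G.rg g = T.rg t" "g \<in> B" "g \<in> G.arr" unfolding N_def by auto
      have tT: "t \<in> T.arr" using t(1) AB(1) openin_subset by fastforce
      have "(t, g) \<in> V" using W AB(5) t tT by auto
      then show "g \<in> snd ` V" by force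
    qed
    then show "\<exists>T. openin XG T \<and> g0 \<in> T \<and> T \<subseteq> snd ` V" using N g0N by blast
  qed
qed

lemma hom_over_proj: "hom_over PG H proj"
  unfolding hom_over_def
proof (rule conjI; rule ballI)
  fix A assume "A \<in> garr PG"
  then obtain t g where x: "(t,g) \<in> TGs" "A = q (t,g)" by (rule PG_cases)
  show "proj A \<in> H.arr \<and> H.rg (proj A) = gr_rng PG A \<and> H.sr (proj A) = gr_src PG A"
    using x by simp
next
  fix z assume z: "z \<in> composable PG"
  obtain A B where e: "z = (A,B)" by (cases z)
  have AB: "A \<in> garr PG" "B \<in> garr PG" "gr_src PG A = gr_rng PG B" using z e comp_PG by auto
  obtain t g where x: "(t,g) \<in> TGs" "A = q (t,g)" using AB(1) by (rule PG_cases)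
  obtain u h where y: "(u,h) \<in> TGs" "B = q (u,h)" using AB(2) by (rule PG_cases)
  have c: "G.sr g = G.rg h" using AB(3) x y by simp
  have m: "gr_mul PG A B = q (T.m t (a (p g) u), G.m g h)" using mul_q[OF x(1) y(1) c] x y by simp
  have mT: "(T.m t (a (p g) u), G.m g h) \<in> TGs" using x y c by simp
  show "case z of (A, B) \<Rightarrow> proj (gr_mul PG A B) = H.m (proj A) (proj B)"
    unfolding e using m mT x y c by simp
qed

lemma proj_cont: "continuous_map Q XH proj"
proof (rule continuous_compose_quotient_map[OF q_quot])
  show "continuous_map XTG XH (proj \<circ> q)"
    by (rule continuous_map_eq[OF continuous_map_comp[OF cont_sndTG cont_p]]) simp
qed

lemma proj_open: "open_map Q XH proj"
proof (rule TGq.open_map_factor)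
  show "open_map XTG XH (p \<circ> snd)" by (rule open_map_compose[OF snd_open open_p])
qed simp

lemma proj_surj: "proj ` garr PG = H.arr"
proof
  show "proj ` garr PG \<subseteq> H.arr" using hom_over_proj unfolding hom_over_def by auto
  show "H.arr \<subseteq> proj ` garr PG"
  proof
    fix h assume "h \<in> H.arr"
    then obtain g where g: "g \<in> G.arr" "h = p g" using p_surj by auto
    have x: "(T.un (G.rg g), g) \<in> TGs" using g by simp
    show "h \<in> proj ` garr PG" using q_in[OF x] proj_q[OF x] g by force
  qed
qed

lemma groupoid_extension_PG: "groupoid_extension PG H proj"
  unfolding groupoid_extension_def
  using lc_groupoid_PG H_lc hom_over_proj proj_cont proj_open proj_surj objGH by simp

lemma K_q: "x \<in> TGs \<Longrightarrow> q x \<in> K \<longleftrightarrow> snd x \<in> S"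
  using q_in[of x] proj_q[of x] rng_q[of x] by (cases x) (auto simp: ext_kernel_def)

lemma K_sub: "K \<subseteq> garr PG" by (auto simp: ext_kernel_def)

lemma incl_q_S:
  assumes "(t, s) \<in> TGs" "s \<in> S"
  shows "q (t, s) = incl (T.m t (phi s))"
proof -
  have b: "t \<in> T.arr" "s \<in> G.arr" "T.rg t = G.rg s" "G.sr s = G.rg s" "G.iv s \<in> S"
    using assms S_arr S_iso S_inv by auto
  let ?y = "(T.m t (phi s), G.un (G.rg s))"
  have yT: "?y \<in> TGs" using b assms by simp
  have e1: "T.m (T.m t (phi s)) (phi (G.iv s)) = t"
  proof -
    have "T.m (T.m t (phi s)) (phi (G.iv s)) = T.m t (T.m (phi s) (phi (G.iv s)))"
      using b assms by (intro T.assoc) auto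
    also have "\<dots> = t" using b assms by simp
    finally show ?thesis .
  qed
  have "(?y, (t, s)) \<in> R" unfolding R_iff using yT assms(2) b e1 by (intro conjI bexI[of _ s]) auto
  then have "q ?y = q (t, s)" using q_eq_iff yT assms(1) by blast
  moreover have "incl (T.m t (phi s)) = q ?y" unfolding incl_def' using b assms by simp
  ultimately show ?thesis by simp
qed

lemma incl_K: "t \<in> T.arr \<Longrightarrow> incl t \<in> K"
  unfolding incl_def' using K_q[of "(t, G.un (T.rg t))"] by simp

lemma incl_cont: "continuous_map XT Q incl"
proof -
  have "continuous_map XT XTG (\<lambda>t. (t, G.un (T.rg t)))"
    by (rule cont_into_TG[OF continuous_map_id[unfolded id_def] continuous_map_comp[OF lc_rng_cont[OF T_lc, unfolded units] lc_unit_cont[OF G_lc]]]) simp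
  from continuous_map_comp[OF this q_cont] show ?thesis unfolding incl_def' .
qed

lemma incl_image: "incl ` T.arr = K"
proof
  show "incl ` T.arr \<subseteq> K" using incl_K by auto
  show "K \<subseteq> incl ` T.arr"
  proof
    fix A assume A: "A \<in> K"
    then have "A \<in> garr PG" using K_sub by auto
    then obtain t g where x: "(t,g) \<in> TGs" "A = q (t,g)" by (rule PG_cases)
    have gS: "g \<in> S" using K_q[OF x(1)] A x(2) by simp
    have "A = incl (T.m t (phi g))" using incl_q_S[OF x(1) gS] x(2) by simp
    moreover have "T.m t (phi g) \<in> T.arr" using x gS by simp
    ultimately show "A \<in> incl ` T.arr" by simp
  qed
qed

lemma incl_inj: "inj_on incl T.arr"
proof (rule inj_onI)
  fix t t' assume t: "t \<in> T.arr" "t' \<in> T.arr" and e: "incl t = incl t'"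
  have m: "(t, G.un (T.rg t)) \<in> TGs" "(t', G.un (T.rg t')) \<in> TGs" using t by simp_all
  have "((t, G.un (T.rg t)), (t', G.un (T.rg t'))) \<in> R" using e m q_eq_iff unfolding incl_def' by blast
  then have "t' = T.m t (phi (G.m (G.un (T.rg t)) (G.iv (G.un (T.rg t')))))"
    and "G.sr (G.un (T.rg t)) = G.sr (G.un (T.rg t'))" unfolding R_char by blast+
  then show "t = t'" using t by simp
qed

lemma incl_open: "open_map XT (subtopology Q K) incl"
  unfolding open_map_def
proof (intro allI impI)
  fix W assume W: "openin XT W"
  define k where "k = (\<lambda>z. T.m (fst z) (phi (snd z)))"
  have ck: "continuous_map (subtopology XTG TS) XT k"
    unfolding k_def
  proof (rule cont_mulT)
    show "continuous_map (subtopology XTG TS) XT fst" by (rule continuous_map_from_subtopology[OF cont_fstTG])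
    have "continuous_map (subtopology XTG TS) (subtopology XG S) snd"
      unfolding continuous_map_in_subtopology
      by (intro conjI continuous_map_from_subtopology[OF cont_sndTG]) auto
    then show "continuous_map (subtopology XTG TS) XT (\<lambda>z. phi (snd z))" by (rule continuous_map_comp[OF _ phi_cont])
    fix z assume "z \<in> topspace (subtopology XTG TS)"
    then show "T.rg (fst z) = T.rg (phi (snd z))" by (cases z) auto
  qed
  define Vw where "Vw = {z \<in> topspace (subtopology XTG TS). k z \<in> W}"
  have oV: "openin (subtopology XTG TS) Vw" unfolding Vw_def
    by (rule openin_continuous_map_preimage[OF ck W])
  have pre: "{x \<in> topspace XTG. q x \<in> K} = TS" using K_q by auto
  have om: "open_map (subtopology XTG TS) (subtopology Q K) q"
    by (rule open_map_restriction[OF q_open pre])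
  have e: "incl ` W = q ` Vw"
  proof
    show "incl ` W \<subseteq> q ` Vw"
    proof
      fix A assume "A \<in> incl ` W"
      then obtain t where t: "t \<in> W" "A = incl t" by auto
      have tT: "t \<in> T.arr" using t W openin_subset by fastforce
      have "(t, G.un (T.rg t)) \<in> Vw" unfolding Vw_def k_def using tT t by simp
      then show "A \<in> q ` Vw" using t unfolding incl_def' by blast
    qed
    show "q ` Vw \<subseteq> incl ` W"
    proof
      fix A assume "A \<in> q ` Vw"
      then obtain t g where z: "(t,g) \<in> Vw" "A = q (t,g)" by auto
      have z': "(t,g) \<in> TGs" "g \<in> S" "k (t,g) \<in> W" using z(1) unfolding Vw_def by auto
      show "A \<in> incl ` W" using incl_q_S[OF z'(1,2)] z'(3) z(2) unfolding k_def by simp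
    qed
  qed
  show "openin (subtopology Q K) (incl ` W)" unfolding e using om oV by (simp add: open_map_def)
qed

lemma incl_homeo: "homeomorphic_map XT (subtopology Q K) incl"
proof (rule bijective_open_imp_homeomorphic_map[OF _ incl_open])
  have tK: "topspace (subtopology Q K) = K" using K_sub by (auto simp: garr_def)
  show "continuous_map XT (subtopology Q K) incl"
    unfolding continuous_map_in_subtopology using incl_cont incl_K by auto
  show "incl ` topspace XT = topspace (subtopology Q K)" "inj_on incl (topspace XT)"
    using incl_image incl_inj tK by simp_all
qed

lemma incl_hom: "hom_over T PG incl"
  unfolding hom_over_def
proof (rule conjI; rule ballI)
  fix t assume t: "t \<in> T.arr"
  have m: "(t, G.un (T.rg t)) \<in> TGs" using t by simp
  show "incl t \<in> garr PG \<and> gr_rng PG (incl t) = T.rg t \<and> gr_src PG (incl t) = T.sr t"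
    unfolding incl_def' using q_in[OF m] t by simp
next
  fix z assume z: "z \<in> composable T"
  obtain t t' where e: "z = (t,t')" by (cases z)
  have tt: "t \<in> T.arr" "t' \<in> T.arr" "T.rg t' = T.rg t" using z e by (auto simp: composable_def)
  have m: "(t, G.un (T.rg t)) \<in> TGs" "(t', G.un (T.rg t)) \<in> TGs" using tt by simp_all
  have "gr_mul PG (incl t) (incl t') = q (T.m t (a (p (G.un (T.rg t))) t'), G.m (G.un (T.rg t)) (G.un (T.rg t)))"
    unfolding incl_def' tt(3) using mul_q[OF m] tt by simp
  also have "\<dots> = incl (T.m t t')" unfolding incl_def' using tt by simp
  finally show "case z of (t, t') \<Rightarrow> incl (T.m t t') = gr_mul PG (incl t) (incl t')" using e by simp
qed

lemma incl_conj:
  assumes A: "A \<in> garr PG" and t: "t \<in> T.arr" and c: "gr_src PG A = T.rg t"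
  shows "gr_mul PG (gr_mul PG A (incl t)) (gr_inv PG A) = incl (a (proj A) t)"
proof -
  obtain t0 g where x: "(t0,g) \<in> TGs" "A = q (t0,g)" using A by (rule PG_cases)
  have b: "t0 \<in> T.arr" "g \<in> G.arr" "T.rg t0 = G.rg g" "T.rg t = G.sr g" using x c t by auto
  have m1: "(t, G.un (G.sr g)) \<in> TGs" using b t by simp
  have jt: "incl t = q (t, G.un (G.sr g))" unfolding incl_def' using b by simp
  let ?X = "a (p g) t"
  have X: "?X \<in> T.arr" "T.rg ?X = G.rg g" using b t by auto
  have s1: "gr_mul PG A (incl t) = q (T.m t0 ?X, g)"
    unfolding jt x(2) using mul_q[OF x(1) m1] b t by simp
  have m2: "(T.m t0 ?X, g) \<in> TGs" using b X by simp
  let ?i = "(a (p (G.iv g)) (T.iv t0), G.iv g)"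
  have iT: "?i \<in> TGs" using b by simp
  have s2: "gr_inv PG A = q ?i" unfolding x(2) using inv_q[OF x(1)] by simp
  have "gr_mul PG (gr_mul PG A (incl t)) (gr_inv PG A) = q (T.m (T.m t0 ?X) (a (p g) (a (p (G.iv g)) (T.iv t0))), G.m g (G.iv g))"
    unfolding s1 s2 using mul_q[OF m2 iT] b by simp
  also have "a (p g) (a (p (G.iv g)) (T.iv t0)) = T.iv t0" using b by simp
  also have "T.m (T.m t0 ?X) (T.iv t0) = ?X"
  proof -
    have "T.m t0 ?X = T.m ?X t0" using b X by (intro T_comm) auto
    then have "T.m (T.m t0 ?X) (T.iv t0) = T.m (T.m ?X t0) (T.iv t0)" by simp
    also have "\<dots> = T.m ?X (T.m t0 (T.iv t0))" using b X by (intro T.assoc) auto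
    also have "\<dots> = ?X" using b X by simp
    finally show ?thesis .
  qed
  also have "q (?X, G.m g (G.iv g)) = incl ?X" unfolding incl_def' using b X by simp
  finally show ?thesis using x by simp
qed

lemma T_extension_PG: "T_extension T H a PG proj incl"
  unfolding T_extension_def
  using groupoid_extension_PG incl_homeo incl_hom incl_conj units by simp

lemma psi_hom: "hom_over G PG psi"
  unfolding hom_over_def
proof (rule conjI; rule ballI)
  fix g assume g: "g \<in> G.arr"
  have m: "(T.un (G.rg g), g) \<in> TGs" using g by simp
  show "psi g \<in> garr PG \<and> gr_rng PG (psi g) = G.rg g \<and> gr_src PG (psi g) = G.sr g"
    unfolding psi_def' using q_in[OF m] g by simp
next
  fix z assume z: "z \<in> composable G"
  obtain g h where e: "z = (g,h)" by (cases z)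
  have gh: "g \<in> G.arr" "h \<in> G.arr" "G.sr g = G.rg h" using z e by (auto simp: composable_def)
  have m: "(T.un (G.rg g), g) \<in> TGs" "(T.un (G.rg h), h) \<in> TGs" using gh by simp_all
  have "gr_mul PG (psi g) (psi h) = q (T.m (T.un (G.rg g)) (a (p g) (T.un (G.rg h))), G.m g h)"
    unfolding psi_def' using mul_q[OF m gh(3)] by simp
  also have "a (p g) (T.un (G.rg h)) = T.un (G.rg g)" using gh a_unitT[of "p g" "G.rg h"] by simp
  also have "q (T.m (T.un (G.rg g)) (T.un (G.rg g)), G.m g h) = psi (G.m g h)" unfolding psi_def' using gh by simp
  finally show "case z of (g, h) \<Rightarrow> psi (G.m g h) = gr_mul PG (psi g) (psi h)" using e by simp
qed

lemma psi_cont: "continuous_map XG Q psi"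
proof -
  have "continuous_map XG XTG (\<lambda>g. (T.un (G.rg g), g))"
    by (rule cont_into_TG[OF continuous_map_comp[OF lc_rng_cont[OF G_lc] lc_unit_cont[OF T_lc, unfolded units]] continuous_map_id[unfolded id_def]]) simp
  from continuous_map_comp[OF this q_cont] show ?thesis unfolding psi_def' .
qed

lemma psi_S: "s \<in> S \<Longrightarrow> psi s = incl (phi s)"
proof -
  assume s: "s \<in> S"
  have m: "(T.un (G.rg s), s) \<in> TGs" using s S_arr by simp
  show ?thesis unfolding psi_def' using incl_q_S[OF m s] s S_arr by simp
qed

lemma psi_proj: "g \<in> G.arr \<Longrightarrow> proj (psi g) = p g"
  unfolding psi_def' by simp

lemma pushout_is_pushout: "is_pushout G H p T a phi PG proj incl psi"
  unfolding is_pushout_def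
  using T_extension_PG psi_hom psi_cont psi_S psi_proj by simp

end

section \<open>Uniqueness of the pushout\<close>

locale pushout_comparison = pushout_construction G H T p a phi + G': groupoid_laws G'
  for G :: "('g, 'u) groupoid" and H :: "('h, 'u) groupoid" and T :: "('t, 'u) groupoid"
    and p a phi and G' :: "('c, 'u) groupoid" +
  fixes p' :: "'c \<Rightarrow> 'h" and j' :: "'t \<Rightarrow> 'c" and psi' :: "'g \<Rightarrow> 'c"
  assumes po: "is_pushout G H p T a phi G' p' j' psi'"
begin

abbreviation "XG' \<equiv> gr_arr G'"
abbreviation "K' \<equiv> ext_kernel G' H p'"

lemma T_ext': "T_extension T H a G' p' j'" using po unfolding is_pushout_def by simp
lemma ext': "groupoid_extension G' H p'" using T_ext' unfolding T_extension_def by simp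
lemma G'_lc: "lc_groupoid G'" using ext' unfolding groupoid_extension_def by simp
lemma obj': "gr_obj G' = gr_obj G" using ext' objGH unfolding groupoid_extension_def by simp
lemma gobj'[simp]: "G'.obj = G.obj" unfolding gobj_def obj' ..
lemma tsG'[simp]: "topspace XG' = G'.arr" by (simp add: garr_def)
lemma p'hom: "hom_over G' H p'" using ext' unfolding groupoid_extension_def by simp
lemma p'cont: "continuous_map XG' XH p'" using ext' unfolding groupoid_extension_def by simp
lemma j'_homeo: "homeomorphic_map XT (subtopology XG' K') j'" using T_ext' unfolding T_extension_def by simp
lemma j'_hom: "hom_over T G' j'" using T_ext' unfolding T_extension_def by simp
lemma j'_conj: "g \<in> G'.arr \<Longrightarrow> t \<in> T.arr \<Longrightarrow> G'.sr g = T.rg t \<Longrightarrow>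
        G'.m (G'.m g (j' t)) (G'.iv g) = j' (a (p' g) t)"
  using T_ext' unfolding T_extension_def by blast
lemma psi'_hom: "hom_over G G' psi'" using po unfolding is_pushout_def by simp
lemma psi'_cont: "continuous_map XG XG' psi'" using po unfolding is_pushout_def by simp
lemma psi'_S: "s \<in> S \<Longrightarrow> psi' s = j' (phi s)" using po unfolding is_pushout_def by simp
lemma psi'_proj: "g \<in> G.arr \<Longrightarrow> p' (psi' g) = p g" using po unfolding is_pushout_def by simp

lemma p'_arr[simp]: "z \<in> G'.arr \<Longrightarrow> p' z \<in> H.arr"
  and p'_rg[simp]: "z \<in> G'.arr \<Longrightarrow> H.rg (p' z) = G'.rg z"
  and p'_sr[simp]: "z \<in> G'.arr \<Longrightarrow> H.sr (p' z) = G'.sr z"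
  using hom_over_arr[OF p'hom] hom_over_rg[OF p'hom] hom_over_sr[OF p'hom] by blast+

lemma p'_mul[simp]: "g \<in> G'.arr \<Longrightarrow> h \<in> G'.arr \<Longrightarrow> G'.sr g = G'.rg h \<Longrightarrow> p' (G'.m g h) = H.m (p' g) (p' h)"
  by (rule hom_over_mul[OF p'hom])
lemma p'_inv[simp]: "g \<in> G'.arr \<Longrightarrow> p' (G'.iv g) = H.iv (p' g)"
  by (rule hom_over_inv[OF G'.groupoid H.groupoid p'hom])

lemma j'_arr[simp]: "t \<in> T.arr \<Longrightarrow> j' t \<in> G'.arr"
  and j'_rg[simp]: "t \<in> T.arr \<Longrightarrow> G'.rg (j' t) = T.rg t"
  using hom_over_arr[OF j'_hom] hom_over_rg[OF j'_hom] by blast+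

lemma j'_sr[simp]: "t \<in> T.arr \<Longrightarrow> G'.sr (j' t) = T.rg t"
proof -
  assume t: "t \<in> T.arr"
  have "G'.sr (j' t) = T.sr t" by (rule hom_over_sr[OF j'_hom t])
  also have "\<dots> = T.rg t" by (rule T_iso[OF t])
  finally show ?thesis .
qed

lemma j'_mul: "t \<in> T.arr \<Longrightarrow> t' \<in> T.arr \<Longrightarrow> T.rg t = T.rg t' \<Longrightarrow> j' (T.m t t') = G'.m (j' t) (j' t')"
  using hom_over_mul[OF j'_hom, of t t'] T_iso by simp

lemma j'_unit[simp]: "x \<in> G.obj \<Longrightarrow> j' (T.un x) = G'.un x"
  using hom_over_unit[OF T.groupoid G'.groupoid j'_hom, of x] by simp

lemma psi'_arr[simp]: "g \<in> G.arr \<Longrightarrow> psi' g \<in> G'.arr"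
  and psi'_rg[simp]: "g \<in> G.arr \<Longrightarrow> G'.rg (psi' g) = G.rg g"
  and psi'_sr[simp]: "g \<in> G.arr \<Longrightarrow> G'.sr (psi' g) = G.sr g"
  using hom_over_arr[OF psi'_hom] hom_over_rg[OF psi'_hom] hom_over_sr[OF psi'_hom] by blast+

lemma psi'_mul: "g \<in> G.arr \<Longrightarrow> h \<in> G.arr \<Longrightarrow> G.sr g = G.rg h \<Longrightarrow> psi' (G.m g h) = G'.m (psi' g) (psi' h)"
  by (rule hom_over_mul[OF psi'_hom])
lemma psi'_unit[simp]: "x \<in> G.obj \<Longrightarrow> psi' (G.un x) = G'.un x"
  using hom_over_unit[OF G.groupoid G'.groupoid psi'_hom] by simp

definition "j_inv = (SOME g. homeomorphic_maps XT (subtopology XG' K') j' g)"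

lemma j_inv_maps: "homeomorphic_maps XT (subtopology XG' K') j' j_inv"
  unfolding j_inv_def using j'_homeo unfolding homeomorphic_map_maps by (rule someI_ex)

lemma K'_sub: "K' \<subseteq> G'.arr" by (auto simp: ext_kernel_def)
lemma tsK': "topspace (subtopology XG' K') = K'" using K'_sub by auto

lemma j_inv_cont: "continuous_map (subtopology XG' K') XT j_inv"
  using j_inv_maps unfolding homeomorphic_maps_def by simp
lemma j_inv_j[simp]: "t \<in> T.arr \<Longrightarrow> j_inv (j' t) = t"
  using j_inv_maps unfolding homeomorphic_maps_def by simp
lemma j_j_inv[simp]: "k \<in> K' \<Longrightarrow> j' (j_inv k) = k"
  using j_inv_maps tsK' unfolding homeomorphic_maps_def by simp
lemma j_inv_T[simp]: "k \<in> K' \<Longrightarrow> j_inv k \<in> T.arr"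
  using j_inv_cont tsK' continuous_map_in by fastforce
lemma j'_K: "t \<in> T.arr \<Longrightarrow> j' t \<in> K'"
  using homeomorphic_imp_surjective_map[OF j'_homeo] tsK' by auto
lemma j'_inj: "t \<in> T.arr \<Longrightarrow> t' \<in> T.arr \<Longrightarrow> j' t = j' t' \<Longrightarrow> t = t'"
  using j_inv_j by metis

lemma K'_I: "z \<in> G'.arr \<Longrightarrow> p' z = H.un (G'.rg z) \<Longrightarrow> z \<in> K'"
  by (simp add: ext_kernel_def)

definition "jpsi x = G'.m (j' (fst x)) (psi' (snd x))"

lemma jpsi_simps:
  assumes "(t,g) \<in> TGs"
  shows "jpsi (t,g) \<in> G'.arr" "G'.rg (jpsi (t,g)) = G.rg g" "G'.sr (jpsi (t,g)) = G.sr g"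
  using assms by (simp_all add: jpsi_def)

lemma jpsi_R:
  assumes "((t,g),(t',g')) \<in> R"
  shows "jpsi (t,g) = jpsi (t',g')"
proof -
  obtain s where s: "(t,g) \<in> TGs" "s \<in> S" "G.sr s = G.rg g" "t' = T.m t (phi (G.iv s))" "g' = G.m s g"
    using assms R_iff by blast
  have b: "t \<in> T.arr" "g \<in> G.arr" "s \<in> G.arr" "G.iv s \<in> S" "T.rg t = G.rg g" "G.rg s = G.rg g"
    using s S_arr S_inv S_iso[OF s(2)] by auto
  have sr: "G.sr s = G.rg g" by (rule s(3))
  let ?a = "j' (phi (G.iv s))" and ?b = "j' (phi s)"
  have ab: "?a \<in> G'.arr" "?b \<in> G'.arr" "G'.rg ?a = G.rg g" "G'.sr ?a = G.rg g" "G'.rg ?b = G.rg g" "G'.sr ?b = G.rg g"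
    using b s(2) sr by auto
  have e1: "j' t' = G'.m (j' t) ?a" unfolding s(4) using b s(2) sr by (intro j'_mul) auto
  have e2: "psi' g' = G'.m ?b (psi' g)" unfolding s(5) using psi'_mul[OF b(3) b(2) sr] psi'_S[OF s(2)] by simp
  have e3: "G'.m ?a ?b = G'.un (G.rg g)"
  proof -
    have "G'.m ?a ?b = j' (T.m (phi (G.iv s)) (phi s))" using b s(2) sr by (intro j'_mul[symmetric]) auto
    also have "\<dots> = G'.un (G.rg g)" using b s(2) sr by simp
    finally show ?thesis .
  qed
  have "jpsi (t',g') = G'.m (G'.m (j' t) ?a) (G'.m ?b (psi' g))" unfolding jpsi_def using e1 e2 by simp
  also have "\<dots> = G'.m (j' t) (G'.m ?a (G'.m ?b (psi' g)))" using ab b by (intro G'.assoc) auto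
  also have "G'.m ?a (G'.m ?b (psi' g)) = G'.m (G'.m ?a ?b) (psi' g)" using ab b by (intro G'.assoc[symmetric]) auto
  also have "\<dots> = psi' g" unfolding e3 using b by simp
  finally show ?thesis by (simp add: jpsi_def)
qed

definition "cmp A = jpsi (rep A)"

lemma cmp_q: "x \<in> TGs \<Longrightarrow> cmp (q x) = jpsi x"
  using jpsi_R rep_q_R unfolding cmp_def by (metis surj_pair)

lemma j'_cont: "continuous_map XT XG' j'"
  using homeomorphic_imp_continuous_map[OF j'_homeo] by (simp add: continuous_map_in_subtopology)

lemma p'_j[simp]: "t \<in> T.arr \<Longrightarrow> p' (j' t) = H.un (T.rg t)"
  using j'_K[of t] by (simp add: ext_kernel_def)

lemmas cont_mulG' = continuous_map_gr_mul[OF lc_topological[OF G'_lc]]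

lemma jpsi_cont: "continuous_map XTG XG' jpsi"
  unfolding jpsi_def
  by (rule cont_mulG'[OF continuous_map_comp[OF cont_fstTG j'_cont] continuous_map_comp[OF cont_sndTG psi'_cont]]) auto

lemma cmp_cont: "continuous_map Q XG' cmp"
proof (rule continuous_compose_quotient_map[OF q_quot])
  show "continuous_map XTG XG' (cmp \<circ> q)"
    by (rule continuous_map_eq[OF jpsi_cont]) (simp add: cmp_q)
qed

lemma p'_jpsi: "(t,g) \<in> TGs \<Longrightarrow> p' (jpsi (t,g)) = p g"
  unfolding jpsi_def using psi'_proj by simp

lemma same_fibre_kernel:
  assumes z: "z \<in> G'.arr" and g: "g \<in> G.arr" and e: "p' z = p g"
  shows "G'.m z (G'.iv (psi' g)) \<in> K'"
proof (rule K'_I)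
  have srz: "G'.sr z = G.sr g" and rgz: "G'.rg z = G.rg g"
    using p'_sr[OF z] p_sr[OF g] p'_rg[OF z] p_rg[OF g] e by metis+
  then show "G'.m z (G'.iv (psi' g)) \<in> G'.arr" using z g by simp
  have "p' (G'.m z (G'.iv (psi' g))) = H.m (p g) (H.iv (p g))" using z g srz e psi'_proj by simp
  also have "\<dots> = H.un (G'.rg (G'.m z (G'.iv (psi' g))))" using z g srz rgz by simp
  finally show "p' (G'.m z (G'.iv (psi' g))) = H.un (G'.rg (G'.m z (G'.iv (psi' g))))" .
qed

lemma jpsi_section:
  assumes z: "z \<in> G'.arr" and g: "g \<in> G.arr" and e: "p' z = p g"
  shows "(j_inv (G'.m z (G'.iv (psi' g))), g) \<in> TGs \<and> jpsi (j_inv (G'.m z (G'.iv (psi' g))), g) = z"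
proof -
  have srz: "G'.sr z = G.sr g" and rgz: "G'.rg z = G.rg g"
    using p'_sr[OF z] p_sr[OF g] p'_rg[OF z] p_rg[OF g] e by metis+
  define t where "t = j_inv (G'.m z (G'.iv (psi' g)))"
  have tT: "t \<in> T.arr" and jt: "j' t = G'.m z (G'.iv (psi' g))"
    unfolding t_def using same_fibre_kernel[OF assms] by simp_all
  have "T.rg t = G'.rg (j' t)" using tT by simp
  also have "\<dots> = G.rg g" unfolding jt using z g srz rgz by simp
  finally have tg: "(t, g) \<in> TGs" using tT g by simp
  have "jpsi (t, g) = G'.m (G'.m z (G'.iv (psi' g))) (psi' g)" unfolding jpsi_def using jt by simp
  also have "\<dots> = G'.m z (G'.m (G'.iv (psi' g)) (psi' g))" using z g srz by (intro G'.assoc) auto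
  also have "\<dots> = z" using z g srz by simp
  finally show ?thesis using tg unfolding t_def by simp
qed

lemma jpsi_open: "open_map XTG XG' jpsi"
  unfolding open_map_def
proof (intro allI impI)
  fix W assume W: "openin XTG W"
  define \<sigma> where "\<sigma> = (\<lambda>(z, g). j_inv (G'.m z (G'.iv (psi' g))))"
  let ?D = "{(z, g). z \<in> topspace XG' \<and> g \<in> G.arr \<and> p' z = p g}"
  let ?Z = "subtopology (prod_topology XG' XG) ?D"
  have D: "fst w \<in> G'.arr" "snd w \<in> G.arr" "p' (fst w) = p (snd w)" if "w \<in> topspace ?Z" for w
    using that by auto
  have "G'.sr (fst w) = G'.rg (G'.iv (psi' (snd w)))" if "w \<in> topspace ?Z" for w
  proof -
    have "G'.sr (fst w) = G.sr (snd w)" using D[OF that] p'_sr p_sr by metis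
    then show ?thesis using D[OF that] by simp
  qed
  then have "continuous_map ?Z XG' (\<lambda>w. G'.m (fst w) (G'.iv (psi' (snd w))))"
    by (rule cont_mulG'[OF continuous_map_fst_sub continuous_map_comp[OF continuous_map_comp[OF continuous_map_snd_sub psi'_cont] lc_inv_cont[OF G'_lc]]])
  moreover have "G'.m (fst w) (G'.iv (psi' (snd w))) \<in> K'" if "w \<in> topspace ?Z" for w
    using same_fibre_kernel D[OF that] by blast
  ultimately have "continuous_map ?Z (subtopology XG' K') (\<lambda>w. G'.m (fst w) (G'.iv (psi' (snd w))))"
    by (auto simp: continuous_map_in_subtopology)
  then have "continuous_map ?Z XT \<sigma>" unfolding \<sigma>_def case_prod_unfold by (rule continuous_map_comp[OF _ j_inv_cont])
  moreover have "z \<in> topspace XG' \<and> p' z = p g \<and> \<sigma> (z, g) = t"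
    if "(t, g) \<in> TGs" "((t, g), z) \<in> {(x, jpsi x) |x. x \<in> TGs}" for t g z
  proof -
    have b: "t \<in> T.arr" "g \<in> G.arr" "T.rg t = G.rg g" "z = jpsi (t, g)" using that by auto
    have "G'.m z (G'.iv (psi' g)) = G'.m (j' t) (G'.m (psi' g) (G'.iv (psi' g)))"
      unfolding b(4) jpsi_def fst_conv snd_conv using b by (intro G'.assoc) auto
    then have "\<sigma> (z, g) = t" unfolding \<sigma>_def using b by simp
    then show ?thesis using b jpsi_simps p'_jpsi that(1) by simp
  qed
  ultimately have "openin XG' ({(x, jpsi x) |x. x \<in> TGs} `` W)"
    using jpsi_section W by (intro openin_Image_by_sections[OF W p'cont]) (auto simp: \<sigma>_def)
  moreover have "{(x, jpsi x) |x. x \<in> TGs} `` W = jpsi ` W" using openin_subset[OF W] by (auto simp del: mem_TGs)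
  ultimately show "openin XG' (jpsi ` W)" by simp
qed

lemma cmp_open: "open_map Q XG' cmp"
  by (rule TGq.open_map_factor[OF jpsi_open]) (simp add: cmp_q)

lemma cmp_surj: "cmp ` garr PG = G'.arr"
proof
  show "cmp ` garr PG \<subseteq> G'.arr"
  proof
    fix z assume "z \<in> cmp ` garr PG"
    then obtain A where A: "A \<in> garr PG" "z = cmp A" by auto
    obtain t g where x: "(t,g) \<in> TGs" "A = q (t,g)" using A(1) by (rule PG_cases)
    show "z \<in> G'.arr" using A x cmp_q jpsi_simps by simp
  qed
  show "G'.arr \<subseteq> cmp ` garr PG"
  proof
    fix z assume z: "z \<in> G'.arr"
    then have "p' z \<in> H.arr" by simp
    then obtain g where g: "g \<in> G.arr" "p' z = p g" using p_surj by force
    obtain t where t: "(t,g) \<in> TGs" "jpsi (t,g) = z" using jpsi_section[OF z g] by blast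
    then show "z \<in> cmp ` garr PG" using q_in[OF t(1)] cmp_q[OF t(1)] by force
  qed
qed

lemma cmp_inj: "inj_on cmp (garr PG)"
proof (rule inj_onI)
  fix A B assume A: "A \<in> garr PG" and B: "B \<in> garr PG" and e: "cmp A = cmp B"
  obtain t g where x: "(t,g) \<in> TGs" "A = q (t,g)" using A by (rule PG_cases)
  obtain t' g' where y: "(t',g') \<in> TGs" "B = q (t',g')" using B by (rule PG_cases)
  have e': "jpsi (t,g) = jpsi (t',g')" using e x y cmp_q by simp
  have b: "t \<in> T.arr" "g \<in> G.arr" "t' \<in> T.arr" "g' \<in> G.arr" "T.rg t = G.rg g" "T.rg t' = G.rg g'" using x y by auto
  have pe: "p g = p g'" using p'_jpsi[OF x(1)] p'_jpsi[OF y(1)] e' by simp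
  have se: "G.sr g = G.sr g'" using jpsi_simps(3)[OF x(1)] jpsi_simps(3)[OF y(1)] e' by simp
  have re: "G.rg g = G.rg g'" using p_rg[OF b(2)] p_rg[OF b(4)] pe by simp
  define s where "s = G.m g (G.iv g')"
  have sS: "s \<in> S" unfolding s_def using S_diff[OF b(2) b(4) se pe] .
  have sa: "s \<in> G.arr" "G.sr s = G.rg g'" "G.rg s = G.rg g" unfolding s_def using b se by auto
  have gs: "g = G.m s g'"
  proof -
    have "G.m s g' = G.m g (G.m (G.iv g') g')" unfolding s_def using b se by (intro G.assoc) auto
    also have "\<dots> = g" using b se by simp
    finally show ?thesis by simp
  qed
  have psg: "psi' g = G'.m (j' (phi s)) (psi' g')"
    using psi'_mul[OF sa(1) b(4) sa(2)] psi'_S[OF sS] gs by simp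
  have "jpsi (t,g) = G'.m (j' t) (G'.m (j' (phi s)) (psi' g'))" unfolding jpsi_def using psg by simp
  also have "\<dots> = G'.m (G'.m (j' t) (j' (phi s))) (psi' g')"
    using b sS sa re by (intro G'.assoc[symmetric]) auto
  also have "G'.m (j' t) (j' (phi s)) = j' (T.m t (phi s))" using b sS sa by (intro j'_mul[symmetric]) auto
  finally have eq: "G'.m (j' (T.m t (phi s))) (psi' g') = G'.m (j' t') (psi' g')" using e' by (simp add: jpsi_def)
  have mm: "T.m t (phi s) \<in> T.arr" "T.rg (T.m t (phi s)) = G.rg g'" using b sS sa re by auto
  have "j' (T.m t (phi s)) = j' t'"
    by (rule G'.cancel_right[OF psi'_arr[OF b(4)] j'_arr[OF mm(1)] j'_arr[OF b(3)] _ _ eq])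
       (use mm b in simp_all)
  then have "T.m t (phi s) = t'" using j'_inj[OF mm(1) b(3)] by blast
  then have tt: "t' = T.m t (phi (G.m g (G.iv g')))" unfolding s_def by simp
  have "((t,g),(t',g')) \<in> R" unfolding R_char using x y se pe tt by blast
  then show "A = B" using x y q_eq_iff by simp
qed

lemma tsQ: "topspace Q = garr PG" unfolding garr_def by simp

lemma cmp_homeo: "homeomorphic_map Q XG' cmp"
  by (rule bijective_open_imp_homeomorphic_map[OF cmp_cont cmp_open]) (simp_all only: tsQ tsG' cmp_surj cmp_inj)

lemma swap:
  assumes g: "g \<in> G.arr" and u: "u \<in> T.arr" and c: "T.rg u = G.sr g"
  shows "G'.m (psi' g) (j' u) = G'.m (j' (a (p g) u)) (psi' g)"
proof -
  have cj: "G'.m (G'.m (psi' g) (j' u)) (G'.iv (psi' g)) = j' (a (p g) u)"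
    using j'_conj[of "psi' g" u] g u c psi'_proj by simp
  have "G'.m (j' (a (p g) u)) (psi' g) = G'.m (G'.m (G'.m (psi' g) (j' u)) (G'.iv (psi' g))) (psi' g)"
    unfolding cj ..
  also have "\<dots> = G'.m (G'.m (psi' g) (j' u)) (G'.m (G'.iv (psi' g)) (psi' g))"
    using g u c by (intro G'.assoc) auto
  also have "\<dots> = G'.m (psi' g) (j' u)" using g u c by simp
  finally show ?thesis by simp
qed

lemma cmp_hom: "hom_over PG G' cmp"
  unfolding hom_over_def
proof (rule conjI; rule ballI)
  fix A assume A: "A \<in> garr PG"
  obtain t g where x: "(t,g) \<in> TGs" "A = q (t,g)" using A by (rule PG_cases)
  show "cmp A \<in> G'.arr \<and> G'.rg (cmp A) = gr_rng PG A \<and> G'.sr (cmp A) = gr_src PG A"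
    using x cmp_q[OF x(1)] jpsi_simps[OF x(1)] by simp
next
  fix z assume z: "z \<in> composable PG"
  obtain A B where e: "z = (A,B)" by (cases z)
  have AB: "A \<in> garr PG" "B \<in> garr PG" "gr_src PG A = gr_rng PG B" using z e comp_PG by auto
  obtain t g where x: "(t,g) \<in> TGs" "A = q (t,g)" using AB(1) by (rule PG_cases)
  obtain u h where y: "(u,h) \<in> TGs" "B = q (u,h)" using AB(2) by (rule PG_cases)
  have c: "G.sr g = G.rg h" using AB(3) x y by simp
  have b: "t \<in> T.arr" "g \<in> G.arr" "u \<in> T.arr" "h \<in> G.arr" "T.rg t = G.rg g" "T.rg u = G.rg h" using x y by auto
  have m: "gr_mul PG A B = q (T.m t (a (p g) u), G.m g h)" using mul_q[OF x(1) y(1) c] x y by simp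
  have mT: "(T.m t (a (p g) u), G.m g h) \<in> TGs" using x y c by simp
  let ?X = "a (p g) u"
  have X: "?X \<in> T.arr" "T.rg ?X = G.rg g" using b c by auto
  have "G'.m (cmp A) (cmp B) = G'.m (G'.m (j' t) (psi' g)) (G'.m (j' u) (psi' h))"
    using x y cmp_q by (simp add: jpsi_def)
  also have "\<dots> = G'.m (j' t) (G'.m (G'.m (psi' g) (j' u)) (psi' h))"
    using b c by (intro G'.assoc4) auto
  also have "G'.m (psi' g) (j' u) = G'.m (j' ?X) (psi' g)" using swap b c by simp
  also have "G'.m (j' t) (G'.m (G'.m (j' ?X) (psi' g)) (psi' h)) = G'.m (G'.m (j' t) (j' ?X)) (G'.m (psi' g) (psi' h))"
    using b c X by (intro G'.assoc4[symmetric]) auto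
  also have "\<dots> = G'.m (j' (T.m t ?X)) (psi' (G.m g h))"
    using b c X j'_mul[of t ?X] psi'_mul[of g h] by simp
  also have "\<dots> = cmp (gr_mul PG A B)" unfolding m cmp_q[OF mT] by (simp add: jpsi_def)
  finally show "case z of (A, B) \<Rightarrow> cmp (gr_mul PG A B) = G'.m (cmp A) (cmp B)" using e by simp
qed

lemma cmp_incl: "t \<in> T.arr \<Longrightarrow> cmp (incl t) = j' t"
  unfolding incl_def' using cmp_q[of "(t, G.un (T.rg t))"] by (simp add: jpsi_def)

lemma cmp_proj: "A \<in> garr PG \<Longrightarrow> p' (cmp A) = proj A"
proof -
  assume A: "A \<in> garr PG"
  obtain t g where x: "(t,g) \<in> TGs" "A = q (t,g)" using A by (rule PG_cases)
  show ?thesis using x cmp_q[OF x(1)] p'_jpsi[OF x(1)] by simp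
qed

lemma cmp_psi: "g \<in> G.arr \<Longrightarrow> cmp (psi g) = psi' g"
  unfolding psi_def' using cmp_q[of "(T.un (G.rg g), g)"] by (simp add: jpsi_def)

lemma cmp_pushouts_iso: "pushouts_iso G T PG proj incl psi G' p' j' psi'"
  unfolding pushouts_iso_def
  using cmp_homeo cmp_hom cmp_incl cmp_proj cmp_psi by auto

end

context pushout_construction
begin

lemma pushout_unique:
  fixes G' :: "('c, 'u) groupoid"
  assumes po: "is_pushout G H p T a phi G' p' j psi'"
  shows "pushouts_iso G T PG proj incl psi G' p' j psi'"
proof -
  have "is_groupoid G'" using po
    unfolding is_pushout_def T_extension_def groupoid_extension_def lc_groupoid_def topological_groupoid_def
    by auto
  then interpret pushout_comparison G H T p a phi G' p' j psi'
    by (intro pushout_comparison.intro pushout_comparison_axioms.intro groupoid_laws.intro po) unfold_locales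
  show ?thesis by (rule cmp_pushouts_iso)
qed

end

theorem mainTheorem7:
  fixes G :: "('g, 'u) groupoid" and H :: "('h, 'u) groupoid" and p :: "'g \<Rightarrow> 'h"
    and T :: "('t, 'u) groupoid" and a :: "'h \<Rightarrow> 't \<Rightarrow> 't" and phi :: "'g \<Rightarrow> 't"
  assumes ext: "groupoid_extension G H p"
    and Tbun: "lc_group_bundle T" and abel: "abelian_bundle T"
    and units: "gr_obj T = gr_obj G"
    and act: "bundle_action H T a"
    and morph: "bundle_morphism G (ext_kernel G H p) T phi"
    and equiv: "\<forall>g\<in>garr G. \<forall>s\<in>ext_kernel G H p. gr_src G g = gr_rng G s \<longrightarrow>
                   phi (gr_mul G (gr_mul G g s) (gr_inv G g)) = a (p g) (phi s)"
  shows "lc_groupoid (TG_groupoid G p T a)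
    \<and> homeomorphic_map (subtopology (gr_arr G) (ext_kernel G H p))
        (subtopology (gr_arr (TG_groupoid G p T a)) (embS G phi ` ext_kernel G H p)) (embS G phi)
    \<and> (\<forall>s\<in>ext_kernel G H p. \<forall>s'\<in>ext_kernel G H p. gr_src G s = gr_rng G s' \<longrightarrow>
         embS G phi (gr_mul G s s') = gr_mul (TG_groupoid G p T a) (embS G phi s) (embS G phi s'))
    \<and> closed_normal_subgroupoid (TG_groupoid G p T a) (embS G phi ` ext_kernel G H p)
    \<and> equiv (TG_set T G) (TG_rel G H p T phi)
    \<and> is_pushout G H p T a phi (pushout_groupoid G H p T a phi) (pushout_proj p)
        (pushout_incl G H p T phi) (phi_star G H p T phi)
    \<and> (\<forall>(G' :: ('c, 'u) groupoid) p' j psi. is_pushout G H p T a phi G' p' j psi \<longrightarrow>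
         pushouts_iso G T (pushout_groupoid G H p T a phi) (pushout_proj p)
           (pushout_incl G H p T phi) (phi_star G H p T phi) G' p' j psi)"
proof -
  have "lc_groupoid G" "lc_groupoid H" "lc_groupoid T"
    using ext Tbun unfolding groupoid_extension_def lc_group_bundle_def by auto
  then interpret pushout_construction G H T p a phi
    by (intro pushout_construction.intro groupoid_laws.intro pushout_construction_axioms.intro
        lc_is_groupoid ext Tbun abel units act morph equiv)
  show ?thesis
    using lc_groupoid_TG emb_homeomorphic emb_mul emb_closed_normal TG_rel_equiv pushout_is_pushout
      pushout_unique by blast
qed

end
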